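(* Consider the grouped linear quantile model with a fixed number $p$ of groups (so $r=dp$ is fixed) and the adaptive fused group LASSO quantile estimator $\widehat{\boldsymbol\beta}_n$ defined in the context. Assume: (A1) the errors $\varepsilon_1,\dots,\varepsilon_n$ are i.i.d. with distribution function $F$ and density $f$, where $f$ is continuous and strictly positive in a neighbourhood of $0$ and has a bounded first derivative in a neighbourhood of $0$, and $F(0)=\tau$; (A2) there exist constants $0<m_0\le M_0<\infty$ such that $m_0\le \lambda_{\min}\big(n^{-1}\sum_{i=1}^n \mathbb{X}_i\mathbb{X}_i^t\big)\le \lambda_{\max}\big(n^{-1}\sum_{i=1}^n \mathbb{X}_i\mathbb{X}_i^t\big)\le M_0$, and moreover $n^{-1}\sum_{i=1}^n \mathbb{X}_i\mathbb{X}_i^t\to \mathbf{U}$ as $n\to\infty$ for some positive definite $r\times r$ matrix $\mathbf{U}$; (A3) $n^{-1/2}\max_{1\le i\le n}\|\mathbb{X}_i\|\to 0$. Suppose the tuning parameters satisfy, for $m=1,2$, as $n\to\infty$: $\mu_n^{(m)}\to\infty$, $n^{-1/2}\mu_n^{(m)}\to 0$ and $n^{(\gamma-1)/2}\mu_n^{(m)}\to\infty$. Then $\sqrt{n}\,\|\widehat{\boldsymbol\beta}_n-\boldsymbol\beta^0\|=O_{\mathbb P}(1)$.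
   Context: Model: $Y_i=\sum_{j=1}^p \mathbf{X}_{ij}^t\boldsymbol\beta_j+\varepsilon_i=\mathbb{X}_i^t\boldsymbol\beta+\varepsilon_i$, $i=1,\dots,n$, where each group $j$ has parameter $\boldsymbol\beta_j\in\mathbb{R}^d$ and design vector $\mathbf{X}_{ij}\in\mathbb{R}^d$, $\boldsymbol\beta=(\boldsymbol\beta_1,\dots,\boldsymbol\beta_p)\in\mathbb{R}^r$, $r=dp$, and $\mathbb{X}_i\in\mathbb{R}^r$ is the concatenation of the $\mathbf{X}_{ij}$ (deterministic design). The true parameter is $\boldsymbol\beta^0=(\boldsymbol\beta^0_1,\dots,\boldsymbol\beta^0_p)$. Fix $\tau\in(0,1)$ and the check function $\rho_\tau(u)=u(\tau-1\!\!1_{u<0})$. Let $G_n(\boldsymbol\beta)=\sum_{i=1}^n\rho_\tau(Y_i-\mathbb{X}_i^t\boldsymbol\beta)$ and let $\widetilde{\boldsymbol\beta}_n=(\widetilde{\boldsymbol\beta}_{n;1},\dots,\widetilde{\boldsymbol\beta}_{n;p})=\arg\min_{\boldsymbol\beta\in\mathbb{R}^r}G_n(\boldsymbol\beta)$ be the quantile estimator. For a fixed $\gamma>0$ define weights $\widehat\omega^{(1)}_{n;j}=\|\widetilde{\boldsymbol\beta}_{n;j}\|^{-\gamma}$ ($j=1,\dots,p$) and $\widehat\omega^{(2)}_{n;j}=\|\widetilde{\boldsymbol\beta}_{n;j}-\widetilde{\boldsymbol\beta}_{n;j-1}\|^{-\gamma}$ ($j=2,\dots,p$). The adaptive fused group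 LASSO quantile estimator $\widehat{\boldsymbol\beta}_n=(\widehat{\boldsymbol\beta}_{n;1},\dots,\widehat{\boldsymbol\beta}_{n;p})$ is a minimizer of $Q_n(\boldsymbol\beta)=G_n(\boldsymbol\beta)+\mu_n^{(1)}\sum_{j=1}^p\widehat\omega^{(1)}_{n;j}\|\boldsymbol\beta_j\|+\mu_n^{(2)}\sum_{j=2}^p\widehat\omega^{(2)}_{n;j}\|\boldsymbol\beta_j-\boldsymbol\beta_{j-1}\|$, with positive tuning parameters $\mu_n^{(1)},\mu_n^{(2)}$. $\|\cdot\|$ is the Euclidean norm. *)

theory Defs
  imports "HOL-Probability.Probability"
begin

text \<open>Parameters are represented as functions \<open>b :: nat \<Rightarrow> nat \<Rightarrow> real\<close>:
  \<open>b j k\<close> is the k-th component (k < d) of the j-th group (j < p).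
  Groups are indexed 0..p-1 and observations 0..n-1.\<close>

definition check_fun :: "real \<Rightarrow> real \<Rightarrow> real" where
  "check_fun \<tau> u = u * (\<tau> - (if u < 0 then 1 else 0))"

definition gnorm :: "nat \<Rightarrow> (nat \<Rightarrow> real) \<Rightarrow> real" where
  "gnorm d v = sqrt (\<Sum>k<d. (v k)^2)"

definition pnorm :: "nat \<Rightarrow> nat \<Rightarrow> (nat \<Rightarrow> nat \<Rightarrow> real) \<Rightarrow> real" where
  "pnorm p d b = sqrt (\<Sum>j<p. \<Sum>k<d. (b j k)^2)"

definition lin :: "nat \<Rightarrow> nat \<Rightarrow> (nat \<Rightarrow> nat \<Rightarrow> real) \<Rightarrow> (nat \<Rightarrow> nat \<Rightarrow> real) \<Rightarrow> real" where
  "lin p d x b = (\<Sum>j<p. \<Sum>k<d. x j k * b j k)"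

definition Gn :: "real \<Rightarrow> nat \<Rightarrow> nat \<Rightarrow> (nat \<Rightarrow> nat \<Rightarrow> nat \<Rightarrow> real) \<Rightarrow> (nat \<Rightarrow> real)
    \<Rightarrow> nat \<Rightarrow> (nat \<Rightarrow> nat \<Rightarrow> real) \<Rightarrow> real" where
  "Gn \<tau> p d X Y n b = (\<Sum>i<n. check_fun \<tau> (Y i - lin p d (X i) b))"

definition Qn :: "real \<Rightarrow> real \<Rightarrow> nat \<Rightarrow> nat \<Rightarrow> (nat \<Rightarrow> nat \<Rightarrow> nat \<Rightarrow> real) \<Rightarrow> (nat \<Rightarrow> real)
    \<Rightarrow> nat \<Rightarrow> real \<Rightarrow> real \<Rightarrow> (nat \<Rightarrow> nat \<Rightarrow> real) \<Rightarrow> (nat \<Rightarrow> nat \<Rightarrow> real) \<Rightarrow> real" where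
  "Qn \<tau> \<gamma> p d X Y n m1 m2 bt b =
     Gn \<tau> p d X Y n b
     + m1 * (\<Sum>j<p. gnorm d (bt j) powr (-\<gamma>) * gnorm d (b j))
     + m2 * (\<Sum>j\<in>{1..<p}. gnorm d (\<lambda>k. bt j k - bt (j-1) k) powr (-\<gamma>)
                               * gnorm d (\<lambda>k. b j k - b (j-1) k))"

definition idx :: "nat \<Rightarrow> nat \<Rightarrow> (nat \<times> nat) set" where
  "idx p d = {..<p} \<times> {..<d}"

definition gram :: "nat \<Rightarrow> (nat \<Rightarrow> nat \<Rightarrow> nat \<Rightarrow> real) \<Rightarrow> (nat \<times> nat) \<Rightarrow> (nat \<times> nat) \<Rightarrow> real" where
  "gram n X a c = (1 / real n) * (\<Sum>i<n. X i (fst a) (snd a) * X i (fst c) (snd c))"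

definition eigvals :: "'i set \<Rightarrow> ('i \<Rightarrow> 'i \<Rightarrow> real) \<Rightarrow> real set" where
  "eigvals I A = {l. \<exists>v. (\<exists>a\<in>I. v a \<noteq> 0) \<and> (\<forall>a\<in>I. (\<Sum>c\<in>I. A a c * v c) = l * v a)}"

definition lambda_min :: "'i set \<Rightarrow> ('i \<Rightarrow> 'i \<Rightarrow> real) \<Rightarrow> real" where
  "lambda_min I A = Min (eigvals I A)"

definition lambda_max :: "'i set \<Rightarrow> ('i \<Rightarrow> 'i \<Rightarrow> real) \<Rightarrow> real" where
  "lambda_max I A = Max (eigvals I A)"

definition pos_def :: "'i set \<Rightarrow> ('i \<Rightarrow> 'i \<Rightarrow> real) \<Rightarrow> bool" where
  "pos_def I A \<longleftrightarrow> (\<forall>a\<in>I. \<forall>c\<in>I. A a c = A c a) \<and>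
     (\<forall>v. (\<exists>a\<in>I. v a \<noteq> 0) \<longrightarrow> (\<Sum>a\<in>I. \<Sum>c\<in>I. v a * A a c * v c) > 0)"

text \<open>Boundedness in probability, Z_n = O_P(1), using outer probability
  (no measurability of Z_n is presupposed).\<close>
definition bounded_in_prob :: "'a measure \<Rightarrow> (nat \<Rightarrow> 'a \<Rightarrow> real) \<Rightarrow> bool" where
  "bounded_in_prob M Z \<longleftrightarrow>
     (\<forall>e>0. \<exists>C. \<exists>N. \<forall>n\<ge>N. \<exists>A\<in>sets M.
        {\<omega>\<in>space M. \<bar>Z n \<omega>\<bar> > C} \<subseteq> A \<and> measure M A < e)"

end

theory Submission
  imports Defs
begin

text \<open>Write \<open>\<beta> = \<beta>0 + v/\<surd>n\<close> and let \<open>D\<^sub>n(v) = G\<^sub>n(\<beta>0 + v/\<surd>n) - G\<^sub>n(\<beta>0)\<close>. Knight's identity splits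
  \<open>D\<^sub>n(v)\<close> into a linear score term and a nonnegative remainder whose mean is of order \<open>\<parallel>v\<parallel>\<^sup>2\<close>,
  because the error density is positive at \<open>0\<close> and the Gram matrices converge to a positive
  definite limit. Chebyshev's inequality on a finite net of the sphere \<open>\<parallel>v\<parallel> = C\<close>, together with
  a Lipschitz bound for \<open>D\<^sub>n\<close> in \<open>v\<close>, shows that outside an event of small probability
  \<open>D\<^sub>n > \<kappa>C\<^sup>2/4\<close> on the whole sphere. By convexity the unpenalised minimiser then lies within
  \<open>C/\<surd>n\<close> of \<open>\<beta>0\<close>. Hence the preliminary estimate keeps the nonzero blocks (and nonzero
  differences) of \<open>\<beta>0\<close> away from \<open>0\<close>, so their adaptive weights stay bounded, while zero blocks
  can only increase the penalty; the penalty therefore changes by \<open>O(\<mu>\<^sub>nC/\<surd>n) = o(C)\<close> on the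
  sphere, and the same convexity argument applies to the penalised objective.\<close>

definition coord :: "(nat \<Rightarrow> nat \<Rightarrow> real) \<Rightarrow> nat \<times> nat \<Rightarrow> real" where
  "coord b a = b (fst a) (snd a)"

lemma finite_idx [simp]: "finite (idx p d)"
  by (simp add: idx_def)

lemma idx_nonempty:
  assumes "p \<ge> 1" "d \<ge> 1"
  shows "idx p d \<noteq> {}"
proof -
  have "(0, 0) \<in> idx p d" using assms by (simp add: idx_def)
  then show ?thesis by auto
qed

lemma pnorm_eq_L2_set: "pnorm p d b = L2_set (coord b) (idx p d)"
  by (simp add: pnorm_def L2_set_def coord_def idx_def sum.cartesian_product split_def)

lemma gnorm_eq_L2_set: "gnorm d v = L2_set v {..<d}"
  by (simp add: gnorm_def L2_set_def)

lemma lin_eq_sum_idx: "lin p d x b = (\<Sum>a\<in>idx p d. coord x a * coord b a)"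
  by (simp add: lin_def coord_def idx_def sum.cartesian_product split_def)

lemma pnorm_nonneg [simp]: "pnorm p d b \<ge> 0"
  by (simp add: pnorm_eq_L2_set)

lemma gnorm_nonneg [simp]: "gnorm d v \<ge> 0"
  by (simp add: gnorm_eq_L2_set)

lemma pnorm_power2: "(pnorm p d v)^2 = (\<Sum>a\<in>idx p d. (coord v a)^2)"
  unfolding pnorm_eq_L2_set L2_set_def by (simp add: sum_nonneg)

lemma abs_lin_le_pnorm_mult: "\<bar>lin p d x b\<bar> \<le> pnorm p d x * pnorm p d b"
proof -
  have "\<bar>lin p d x b\<bar> \<le> (\<Sum>a\<in>idx p d. \<bar>coord x a\<bar> * \<bar>coord b a\<bar>)"
    unfolding lin_eq_sum_idx by (rule order.trans[OF sum_abs]) (simp add: abs_mult)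
  also have "\<dots> \<le> pnorm p d x * pnorm p d b"
    unfolding pnorm_eq_L2_set by (rule L2_set_mult_ineq)
  finally show ?thesis .
qed

lemma lin_add: "lin p d x (\<lambda>j k. b j k + c j k) = lin p d x b + lin p d x c"
  by (simp add: lin_def distrib_left sum.distrib)

lemma lin_diff: "lin p d x (\<lambda>j k. b j k - c j k) = lin p d x b - lin p d x c"
  by (simp add: lin_def right_diff_distrib sum_subtractf)

lemma lin_scale: "lin p d x (\<lambda>j k. s * b j k) = s * lin p d x b"
  by (simp add: lin_def sum_distrib_left mult_ac)

lemma lin_divide: "lin p d x (\<lambda>j k. b j k / s) = lin p d x b / s"
  by (simp add: lin_def sum_divide_distrib)

lemma pnorm_scale: "pnorm p d (\<lambda>j k. s * b j k) = \<bar>s\<bar> * pnorm p d b"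
  unfolding pnorm_eq_L2_set coord_def
  by (subst L2_set_right_distrib) (auto simp: L2_set_def power_mult_distrib)

lemma pnorm_triangle: "pnorm p d (\<lambda>j k. b j k + c j k) \<le> pnorm p d b + pnorm p d c"
  unfolding pnorm_eq_L2_set coord_def by (rule L2_set_triangle_ineq)

lemma pnorm_diff_commute: "pnorm p d (\<lambda>j k. b j k - c j k) = pnorm p d (\<lambda>j k. c j k - b j k)"
  by (simp add: pnorm_def power2_commute)

lemma pnorm_le_pnorm_add_diff: "pnorm p d b \<le> pnorm p d c + pnorm p d (\<lambda>j k. b j k - c j k)"
  using pnorm_triangle[of p d c "\<lambda>j k. b j k - c j k"] by simp

lemma gnorm_le_pnorm: "j < p \<Longrightarrow> gnorm d (b j) \<le> pnorm p d b"
  unfolding gnorm_def pnorm_def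
  by (intro real_sqrt_le_mono member_le_sum[where f="\<lambda>j. \<Sum>k<d. (b j k)^2"]) (auto intro: sum_nonneg)

lemma abs_le_pnorm: "j < p \<Longrightarrow> k < d \<Longrightarrow> \<bar>b j k\<bar> \<le> pnorm p d b"
proof -
  assume j: "j < p" and k: "k < d"
  have "\<bar>b j k\<bar> = sqrt ((b j k)^2)" by simp
  also have "\<dots> \<le> gnorm d (b j)" unfolding gnorm_def
    by (intro real_sqrt_le_mono member_le_sum[where f="\<lambda>k. (b j k)^2"]) (auto simp: k)
  also have "\<dots> \<le> pnorm p d b" by (rule gnorm_le_pnorm[OF j])
  finally show ?thesis .
qed

lemma abs_coord_le_pnorm: "a \<in> idx p d \<Longrightarrow> \<bar>coord v a\<bar> \<le> pnorm p d v"
  using abs_le_pnorm[of "fst a" p "snd a" d v] by (auto simp: idx_def coord_def)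

lemma gnorm_triangle: "gnorm d (\<lambda>k. x k + y k) \<le> gnorm d x + gnorm d y"
  unfolding gnorm_eq_L2_set by (rule L2_set_triangle_ineq)

lemma gnorm_scale: "gnorm d (\<lambda>k. s * x k) = \<bar>s\<bar> * gnorm d x"
  unfolding gnorm_eq_L2_set
  by (subst L2_set_right_distrib) (auto simp: L2_set_def power_mult_distrib)

lemma gnorm_minus: "gnorm d (\<lambda>k. - x k) = gnorm d x"
  by (simp add: gnorm_def)

lemma gnorm_convex:
  "0 \<le> l \<Longrightarrow> l \<le> 1 \<Longrightarrow>
     gnorm d (\<lambda>k. (1-l) * x k + l * y k) \<le> (1-l) * gnorm d x + l * gnorm d y"
  using gnorm_triangle[of d "\<lambda>k. (1-l) * x k" "\<lambda>k. l * y k"] by (simp add: gnorm_scale)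

lemma gnorm_diff_le_add: "gnorm d (\<lambda>k. x k - y k) \<le> gnorm d x + gnorm d y"
  using gnorm_triangle[of d x "\<lambda>k. - y k"] gnorm_minus[of d y] by simp

lemma gnorm_diff_commute: "gnorm d (\<lambda>k. x k - y k) = gnorm d (\<lambda>k. y k - x k)"
  by (simp add: gnorm_def power2_commute)

lemma gnorm_sub_gnorm_add_le: "gnorm d a - gnorm d (\<lambda>k. a k + x k) \<le> gnorm d x"
  using gnorm_triangle[of d "\<lambda>k. a k + x k" "\<lambda>k. - x k"] gnorm_minus[of d x] by simp

lemma check_fun_eq_max:
  "0 < \<tau> \<Longrightarrow> \<tau> < 1 \<Longrightarrow> check_fun \<tau> u = max (\<tau> * u) ((\<tau> - 1) * u)"
  by (auto simp: check_fun_def max_def mult_le_cancel_right algebra_simps)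

lemma check_fun_convex:
  assumes "0 \<le> l" "l \<le> 1" "0 < \<tau>" "\<tau> < 1"
  shows "check_fun \<tau> ((1-l) * x + l * y) \<le> (1-l) * check_fun \<tau> x + l * check_fun \<tau> y"
proof -
  have "c * ((1-l) * x + l * y) \<le> (1-l) * check_fun \<tau> x + l * check_fun \<tau> y"
    if "c = \<tau> \<or> c = \<tau> - 1" for c
  proof -
    have "c * ((1-l) * x + l * y) = (1-l) * (c * x) + l * (c * y)" by (simp add: algebra_simps)
    also have "\<dots> \<le> (1-l) * check_fun \<tau> x + l * check_fun \<tau> y"
      using that assms by (intro add_mono mult_left_mono) (auto simp: check_fun_eq_max)
    finally show ?thesis .
  qed
  then show ?thesis using assms by (simp add: check_fun_eq_max)
qed

lemma check_fun_Lipschitz: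
  assumes "0 < \<tau>" "\<tau> < 1"
  shows "\<bar>check_fun \<tau> x - check_fun \<tau> y\<bar> \<le> \<bar>x - y\<bar>"
proof -
  have "\<bar>c * x - c * y\<bar> \<le> \<bar>x - y\<bar>" if "\<bar>c\<bar> \<le> 1" for c
  proof -
    have "\<bar>c * x - c * y\<bar> = \<bar>c\<bar> * \<bar>x - y\<bar>" by (simp add: right_diff_distrib[symmetric] abs_mult)
    also have "\<dots> \<le> 1 * \<bar>x - y\<bar>" using that by (intro mult_right_mono) auto
    finally show ?thesis by simp
  qed
  from this[of \<tau>] this[of "\<tau> - 1"] assms show ?thesis
    by (simp add: check_fun_eq_max max_def abs_le_iff)
qed

text \<open>Knight's identity: the increment of the check function splits into a linear
  term carrying the sign of the error and a nonnegative remainder.\<close>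
definition knight_rem :: "real \<Rightarrow> real \<Rightarrow> real" where
  "knight_rem x t = (if x \<ge> 0 then max 0 (t - x) else max 0 (x - t))"

lemma check_fun_diff_eq:
  "check_fun \<tau> (x - t) - check_fun \<tau> x = - t * (\<tau> - of_bool (x < 0)) + knight_rem x t"
  unfolding check_fun_def knight_rem_def by (auto simp: algebra_simps max_def)

lemma knight_rem_nonneg: "knight_rem x t \<ge> 0"
  by (simp add: knight_rem_def)

lemma knight_rem_le_abs: "knight_rem x t \<le> \<bar>t\<bar>"
  by (auto simp: knight_rem_def max_def)

lemma knight_rem_Lipschitz:
  "\<bar>knight_rem x t - knight_rem x t'\<bar> \<le> \<bar>t - t'\<bar> * of_bool (\<bar>x\<bar> \<le> max \<bar>t\<bar> \<bar>t'\<bar>)"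
  by (auto simp: knight_rem_def max_def abs_le_iff)

lemma knight_rem_ge_half:
  "x \<in> (if t > 0 then {t/4..t/2} else {t/2..t/4}) \<Longrightarrow> knight_rem x t \<ge> \<bar>t\<bar>/2"
  by (auto simp: knight_rem_def max_def split: if_splits)

lemma knight_rem_measurable [measurable]:
  assumes [measurable]: "g \<in> borel_measurable N" "h \<in> borel_measurable N"
  shows "(\<lambda>x. knight_rem (g x) (h x)) \<in> borel_measurable N"
  unfolding knight_rem_def by measurable

lemma check_fun_measurable [measurable]:
  assumes [measurable]: "g \<in> borel_measurable N"
  shows "(\<lambda>x. check_fun \<tau> (g x)) \<in> borel_measurable N"
  unfolding check_fun_def by measurable

lemma exists_grid_net:
  assumes s: "s > 0" and R: "R \<ge> 0"
  shows "\<exists>Gr. finite Gr \<and> card Gr \<le> (nat (2 * \<lceil>R/s\<rceil> + 1))^(p*d) \<and>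
    (\<forall>v. pnorm p d v \<le> R \<longrightarrow> (\<exists>w\<in>Gr. pnorm p d (\<lambda>j k. v j k - w j k) \<le> s * sqrt (real (p*d))))"
proof -
  define K where "K = \<lceil>R/s\<rceil>"
  define emb where "emb g = (\<lambda>j k. s * real_of_int (g (j,k)))" for g :: "nat \<times> nat \<Rightarrow> int"
  define Gr where "Gr = emb ` (PiE (idx p d) (\<lambda>_. {-K..K}))"
  have fin: "finite Gr" unfolding Gr_def by (intro finite_imageI finite_PiE) auto
  have "card Gr \<le> card (PiE (idx p d) (\<lambda>_. {-K..K}))" unfolding Gr_def by (rule card_image_le) (intro finite_PiE, auto)
  also have "\<dots> = (nat (2 * K + 1))^(p*d)"
    by (simp add: card_PiE idx_def card_cartesian_product)
  finally have cardG: "card Gr \<le> (nat (2 * \<lceil>R/s\<rceil> + 1))^(p*d)" unfolding K_def .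
  have approx: "\<exists>w\<in>Gr. pnorm p d (\<lambda>j k. v j k - w j k) \<le> s * sqrt (real (p*d))" if v: "pnorm p d v \<le> R" for v
  proof -
    define g where "g = (\<lambda>a\<in>idx p d. round (coord v a / s))"
    have gK: "g \<in> PiE (idx p d) (\<lambda>_. {-K..K})"
    proof -
      have "round (coord v a / s) \<in> {-K..K}" if a: "a \<in> idx p d" for a
      proof -
        have "\<bar>coord v a\<bar> \<le> R" using abs_le_pnorm[of "fst a" p "snd a" d v] a v by (auto simp: idx_def coord_def)
        then have "\<bar>coord v a / s\<bar> \<le> R / s" using s by (simp add: abs_divide divide_right_mono)
        also have "\<dots> \<le> of_int K" unfolding K_def by simp
        finally have "\<bar>coord v a / s\<bar> \<le> of_int K" .
        then have x: "- of_int K \<le> coord v a / s" "coord v a / s \<le> of_int K" by (simp_all only: abs_le_iff) linarith+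
        have "round (coord v a / s) \<le> K" unfolding round_def using x by (simp add: floor_le_iff)
        moreover have "- K \<le> round (coord v a / s)" unfolding round_def using x by (simp add: le_floor_iff)
        ultimately show ?thesis by auto
      qed
      then show ?thesis unfolding g_def by auto
    qed
    define w where "w = emb g"
    have wG: "w \<in> Gr" unfolding w_def Gr_def using gK by auto
    have comp: "\<bar>coord v a - coord w a\<bar> \<le> s / 2" if a: "a \<in> idx p d" for a
    proof -
      have "coord w a = s * of_int (round (coord v a / s))" using a by (simp add: w_def emb_def coord_def g_def)
      then have "\<bar>coord v a - coord w a\<bar> = s * \<bar>of_int (round (coord v a / s)) - coord v a / s\<bar>"
        using s by (simp add: abs_mult_pos' right_diff_distrib abs_minus_commute)
      also have "\<dots> \<le> s * (1/2)" using s by (intro mult_left_mono of_int_round_abs_le) auto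
      finally show ?thesis by simp
    qed
    have "(pnorm p d (\<lambda>j k. v j k - w j k))^2 = (\<Sum>a\<in>idx p d. (coord v a - coord w a)^2)"
      unfolding pnorm_eq_L2_set L2_set_def by (simp add: sum_nonneg coord_def)
    also have "\<dots> \<le> (\<Sum>a\<in>idx p d. s^2)"
    proof (rule sum_mono)
      fix a assume "a \<in> idx p d"
      then have "\<bar>coord v a - coord w a\<bar> \<le> s" using comp s by fastforce
      then have "\<bar>coord v a - coord w a\<bar>^2 \<le> s^2" by (intro power_mono) auto
      then show "(coord v a - coord w a)^2 \<le> s^2" by simp
    qed
    also have "\<dots> = (s * sqrt (real (p*d)))^2" by (simp add: idx_def card_cartesian_product power_mult_distrib)
    finally have "(pnorm p d (\<lambda>j k. v j k - w j k))^2 \<le> (s * sqrt (real (p*d)))^2" .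
    then have "pnorm p d (\<lambda>j k. v j k - w j k) \<le> s * sqrt (real (p*d))"
      by (rule power2_le_imp_le) (use s in auto)
    then show ?thesis using wG by blast
  qed
  show ?thesis using fin cardG approx by blast
qed

section \<open>Convexity and the adaptive penalty\<close>

lemma Gn_convex:
  assumes "0 \<le> l" "l \<le> 1" "0 < \<tau>" "\<tau> < 1"
  shows "Gn \<tau> p d X Y n (\<lambda>j k. (1-l) * a j k + l * b j k) \<le> (1-l) * Gn \<tau> p d X Y n a + l * Gn \<tau> p d X Y n b"
proof -
  have e: "Y i - lin p d (X i) (\<lambda>j k. (1-l) * a j k + l * b j k) = (1-l) * (Y i - lin p d (X i) a) + l * (Y i - lin p d (X i) b)" for i
  proof -
    have "lin p d (X i) (\<lambda>j k. (1-l) * a j k + l * b j k) = (1-l) * lin p d (X i) a + l * lin p d (X i) b"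
      using lin_add[of p d "X i" "\<lambda>j k. (1-l) * a j k" "\<lambda>j k. l * b j k"] lin_scale[of p d "X i" "1-l" a] lin_scale[of p d "X i" l b]
      by simp
    then show ?thesis by (simp add: algebra_simps)
  qed
  have "Gn \<tau> p d X Y n (\<lambda>j k. (1-l) * a j k + l * b j k) \<le> (\<Sum>i<n. (1-l) * check_fun \<tau> (Y i - lin p d (X i) a) + l * check_fun \<tau> (Y i - lin p d (X i) b))"
    unfolding Gn_def e by (intro sum_mono check_fun_convex) (use assms in auto)
  also have "\<dots> = (1-l) * Gn \<tau> p d X Y n a + l * Gn \<tau> p d X Y n b"
    unfolding Gn_def by (simp add: sum.distrib sum_distrib_left)
  finally show ?thesis .
qed

lemma weighted_gnorm_sum_convex:
  assumes l: "0 \<le> l" "l \<le> 1" and w: "\<And>j. w j \<ge> 0"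
  shows "(\<Sum>j\<in>J. w j * gnorm d (\<lambda>k. (1-l) * x j k + l * y j k))
           \<le> (1-l) * (\<Sum>j\<in>J. w j * gnorm d (x j)) + l * (\<Sum>j\<in>J. w j * gnorm d (y j))"
proof -
  have "(\<Sum>j\<in>J. w j * gnorm d (\<lambda>k. (1-l) * x j k + l * y j k))
      \<le> (\<Sum>j\<in>J. w j * ((1-l) * gnorm d (x j) + l * gnorm d (y j)))"
    using l w by (intro sum_mono mult_left_mono gnorm_convex) auto
  also have "\<dots> = (1-l) * (\<Sum>j\<in>J. w j * gnorm d (x j)) + l * (\<Sum>j\<in>J. w j * gnorm d (y j))"
    by (simp add: sum.distrib sum_distrib_left mult.left_commute distrib_left)
  finally show ?thesis .
qed

lemma Qn_convex:
  assumes l: "0 \<le> l" "l \<le> 1" and "0 < \<tau>" "\<tau> < 1" and m: "m1 \<ge> 0" "m2 \<ge> 0"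
  shows "Qn \<tau> \<gamma> p d X Y n m1 m2 bt (\<lambda>j k. (1-l) * a j k + l * b j k)
    \<le> (1-l) * Qn \<tau> \<gamma> p d X Y n m1 m2 bt a + l * Qn \<tau> \<gamma> p d X Y n m1 m2 bt b"
proof -
  define w1 where "w1 j = gnorm d (bt j) powr (-\<gamma>)" for j
  define w2 where "w2 j = gnorm d (\<lambda>k. bt j k - bt (j-1) k) powr (-\<gamma>)" for j
  have P1: "(\<Sum>j<p. w1 j * gnorm d (\<lambda>k. (1-l) * a j k + l * b j k))
      \<le> (1-l) * (\<Sum>j<p. w1 j * gnorm d (a j)) + l * (\<Sum>j<p. w1 j * gnorm d (b j))"
    by (rule weighted_gnorm_sum_convex[OF l]) (simp add: w1_def)
  have "(\<lambda>k. ((1-l) * a j k + l * b j k) - ((1-l) * a (j-1) k + l * b (j-1) k))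
      = (\<lambda>k. (1-l) * (a j k - a (j-1) k) + l * (b j k - b (j-1) k))" for j
    by (simp add: algebra_simps)
  then have P2: "(\<Sum>j\<in>{1..<p}. w2 j * gnorm d (\<lambda>k. ((1-l) * a j k + l * b j k) - ((1-l) * a (j-1) k + l * b (j-1) k)))
      \<le> (1-l) * (\<Sum>j\<in>{1..<p}. w2 j * gnorm d (\<lambda>k. a j k - a (j-1) k))
        + l * (\<Sum>j\<in>{1..<p}. w2 j * gnorm d (\<lambda>k. b j k - b (j-1) k))"
    using weighted_gnorm_sum_convex[OF l, of w2 d "\<lambda>j k. a j k - a (j-1) k" "\<lambda>j k. b j k - b (j-1) k"]
    by (simp add: w2_def)
  have "Gn \<tau> p d X Y n (\<lambda>j k. (1-l) * a j k + l * b j k) \<le> (1-l) * Gn \<tau> p d X Y n a + l * Gn \<tau> p d X Y n b"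
    by (rule Gn_convex) (use assms in auto)
  moreover note mult_left_mono[OF P1 m(1)] mult_left_mono[OF P2 m(2)]
  ultimately show ?thesis unfolding Qn_def w1_def[symmetric] w2_def[symmetric]
    by (simp add: algebra_simps)
qed

definition weight_cap :: "real \<Rightarrow> nat \<Rightarrow> (nat \<Rightarrow> real) \<Rightarrow> real" where
  "weight_cap \<gamma> d a = (if gnorm d a = 0 then 0 else (gnorm d a / 2) powr (-\<gamma>))"

lemma weight_cap_nonneg: "weight_cap \<gamma> d a \<ge> 0"
  by (simp add: weight_cap_def)

text \<open>Once \<open>c\<close> is within \<open>\<parallel>a\<parallel>/2\<close> of \<open>a\<close>, the adaptive weight \<open>\<parallel>c\<parallel>^-\<gamma>\<close> is capped; if \<open>a = 0\<close>
  the penalty can only grow when moving away from \<open>a\<close>, whatever the weight.\<close>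
lemma weighted_gnorm_decrease_le:
  assumes g: "\<gamma> > 0"
    and close: "gnorm d a \<noteq> 0 \<Longrightarrow> gnorm d (\<lambda>k. c k - a k) \<le> gnorm d a / 2"
    and S: "gnorm d y \<le> S"
  shows "gnorm d c powr (-\<gamma>) * (gnorm d a - gnorm d (\<lambda>k. a k + y k)) \<le> weight_cap \<gamma> d a * S"
proof (cases "gnorm d a = 0")
  case True
  then have "gnorm d c powr (-\<gamma>) * (gnorm d a - gnorm d (\<lambda>k. a k + y k)) \<le> 0"
    by (intro mult_nonneg_nonpos) auto
  then show ?thesis using True by (simp add: weight_cap_def)
next
  case False
  then have ga: "gnorm d a > 0" using gnorm_nonneg[of d a] by linarith
  have "gnorm d a \<le> gnorm d c + gnorm d (\<lambda>k. a k - c k)"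
    using gnorm_triangle[of d c "\<lambda>k. a k - c k"] by simp
  then have gc: "gnorm d c \<ge> gnorm d a / 2" using close[OF False] gnorm_diff_commute[of d a c] by linarith
  have w: "gnorm d c powr (-\<gamma>) \<le> (gnorm d a / 2) powr (-\<gamma>)"
    by (rule powr_mono2') (use g ga gc in auto)
  have diff: "gnorm d a - gnorm d (\<lambda>k. a k + y k) \<le> S"
    using gnorm_sub_gnorm_add_le[of d a y] S by linarith
  have S0: "S \<ge> 0" using S gnorm_nonneg[of d y] by linarith
  have "gnorm d c powr (-\<gamma>) * (gnorm d a - gnorm d (\<lambda>k. a k + y k)) \<le> gnorm d c powr (-\<gamma>) * S"
    by (rule mult_left_mono[OF diff]) simp
  also have "\<dots> \<le> (gnorm d a / 2) powr (-\<gamma>) * S" by (rule mult_right_mono[OF w S0])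
  finally show ?thesis using False by (simp add: weight_cap_def)
qed

lemma weighted_gnorm_sum_decrease_le:
  assumes g: "\<gamma> > 0"
    and close: "\<And>j. j \<in> J \<Longrightarrow> gnorm d (a j) \<noteq> 0 \<Longrightarrow> gnorm d (\<lambda>k. c j k - a j k) \<le> gnorm d (a j) / 2"
    and S: "\<And>j. j \<in> J \<Longrightarrow> gnorm d (y j) \<le> S"
  shows "(\<Sum>j\<in>J. gnorm d (c j) powr (-\<gamma>) * gnorm d (a j))
           - (\<Sum>j\<in>J. gnorm d (c j) powr (-\<gamma>) * gnorm d (\<lambda>k. a j k + y j k))
         \<le> (\<Sum>j\<in>J. weight_cap \<gamma> d (a j)) * S"
proof -
  have "(\<Sum>j\<in>J. gnorm d (c j) powr (-\<gamma>) * gnorm d (a j))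
           - (\<Sum>j\<in>J. gnorm d (c j) powr (-\<gamma>) * gnorm d (\<lambda>k. a j k + y j k))
      = (\<Sum>j\<in>J. gnorm d (c j) powr (-\<gamma>) * (gnorm d (a j) - gnorm d (\<lambda>k. a j k + y j k)))"
    by (simp add: sum_subtractf right_diff_distrib)
  also have "\<dots> \<le> (\<Sum>j\<in>J. weight_cap \<gamma> d (a j) * S)"
    using close S by (intro sum_mono weighted_gnorm_decrease_le[OF g]) auto
  finally show ?thesis by (simp add: sum_distrib_right)
qed

definition weight_bound :: "real \<Rightarrow> nat \<Rightarrow> nat \<Rightarrow> (nat \<Rightarrow> nat \<Rightarrow> real) \<Rightarrow> real" where
  "weight_bound \<gamma> p d b =
     (\<Sum>j<p. weight_cap \<gamma> d (b j)) + (\<Sum>j\<in>{1..<p}. weight_cap \<gamma> d (\<lambda>k. b j k - b (j-1) k))"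

lemma Qn_decrease_le:
  assumes g: "\<gamma> > 0" and m: "m1 \<ge> 0" "m2 \<ge> 0" and R: "pnorm p d x \<le> R"
    and close: "pnorm p d (\<lambda>j k. bt j k - b0 j k) \<le> \<rho>"
    and \<rho>1: "\<And>j. j < p \<Longrightarrow> gnorm d (b0 j) \<noteq> 0 \<Longrightarrow> \<rho> \<le> gnorm d (b0 j) / 4"
    and \<rho>2: "\<And>j. j < p \<Longrightarrow> 1 \<le> j \<Longrightarrow> gnorm d (\<lambda>k. b0 j k - b0 (j-1) k) \<noteq> 0 \<Longrightarrow>
               \<rho> \<le> gnorm d (\<lambda>k. b0 j k - b0 (j-1) k) / 4"
  shows "Qn \<tau> \<gamma> p d X Y n m1 m2 bt b0 - Qn \<tau> \<gamma> p d X Y n m1 m2 bt (\<lambda>j k. b0 j k + x j k)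
     \<le> Gn \<tau> p d X Y n b0 - Gn \<tau> p d X Y n (\<lambda>j k. b0 j k + x j k) + (m1 + m2) * weight_bound \<gamma> p d b0 * (2 * R)"
proof -
  define W1 where "W1 = (\<Sum>j<p. weight_cap \<gamma> d (b0 j))"
  define W2 where "W2 = (\<Sum>j\<in>{1..<p}. weight_cap \<gamma> d (\<lambda>k. b0 j k - b0 (j-1) k))"
  have W: "W1 \<ge> 0" "W2 \<ge> 0" unfolding W1_def W2_def by (simp_all add: sum_nonneg weight_cap_nonneg)
  have R0: "R \<ge> 0" using R pnorm_nonneg[of p d x] by linarith
  have bt_block: "gnorm d (\<lambda>k. bt j k - b0 j k) \<le> \<rho>" if "j < p" for j
    using gnorm_le_pnorm[OF that, of d "\<lambda>j k. bt j k - b0 j k"] close by simp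
  have x_block: "gnorm d (x j) \<le> R" if "j < p" for j
    using gnorm_le_pnorm[OF that, of d x] R by simp
  have T1: "(\<Sum>j<p. gnorm d (bt j) powr (-\<gamma>) * gnorm d (b0 j))
      - (\<Sum>j<p. gnorm d (bt j) powr (-\<gamma>) * gnorm d (\<lambda>k. b0 j k + x j k)) \<le> W1 * R"
    unfolding W1_def
  proof (rule weighted_gnorm_sum_decrease_le[OF g])
    fix j assume "j \<in> {..<p}" "gnorm d (b0 j) \<noteq> 0"
    then have "gnorm d (\<lambda>k. bt j k - b0 j k) \<le> \<rho>" "\<rho> \<le> gnorm d (b0 j) / 4"
      using bt_block \<rho>1 by auto
    then show "gnorm d (\<lambda>k. bt j k - b0 j k) \<le> gnorm d (b0 j) / 2"
      using gnorm_nonneg[of d "b0 j"] by linarith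
  qed (use x_block in auto)
  have "(\<Sum>j\<in>{1..<p}. gnorm d (\<lambda>k. bt j k - bt (j-1) k) powr (-\<gamma>) * gnorm d (\<lambda>k. b0 j k - b0 (j-1) k))
      - (\<Sum>j\<in>{1..<p}. gnorm d (\<lambda>k. bt j k - bt (j-1) k) powr (-\<gamma>)
           * gnorm d (\<lambda>k. (b0 j k - b0 (j-1) k) + (x j k - x (j-1) k))) \<le> W2 * (2 * R)"
    unfolding W2_def
  proof (rule weighted_gnorm_sum_decrease_le[OF g])
    fix j assume j: "j \<in> {1..<p}" and nz: "gnorm d (\<lambda>k. b0 j k - b0 (j-1) k) \<noteq> 0"
    have "gnorm d (\<lambda>k. (bt j k - bt (j-1) k) - (b0 j k - b0 (j-1) k))
        = gnorm d (\<lambda>k. (bt j k - b0 j k) - (bt (j-1) k - b0 (j-1) k))" by (simp add: algebra_simps)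
    also have "\<dots> \<le> gnorm d (\<lambda>k. bt j k - b0 j k) + gnorm d (\<lambda>k. bt (j-1) k - b0 (j-1) k)"
      by (rule gnorm_diff_le_add)
    also have "\<dots> \<le> \<rho> + \<rho>" using bt_block[of j] bt_block[of "j-1"] j by (intro add_mono) auto
    also have "\<dots> \<le> gnorm d (\<lambda>k. b0 j k - b0 (j-1) k) / 2" using \<rho>2[of j] j nz by auto
    finally show "gnorm d (\<lambda>k. (bt j k - bt (j-1) k) - (b0 j k - b0 (j-1) k))
        \<le> gnorm d (\<lambda>k. b0 j k - b0 (j-1) k) / 2" .
  next
    fix j assume "j \<in> {1..<p}"
    then have "gnorm d (x j) \<le> R" "gnorm d (x (j-1)) \<le> R" using x_block by auto
    then show "gnorm d (\<lambda>k. x j k - x (j-1) k) \<le> 2 * R"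
      using gnorm_diff_le_add[of d "x j" "x (j-1)"] by linarith
  qed
  moreover have "(\<lambda>k. (b0 j k + x j k) - (b0 (j-1) k + x (j-1) k))
      = (\<lambda>k. (b0 j k - b0 (j-1) k) + (x j k - x (j-1) k))" for j
    by (simp add: algebra_simps)
  ultimately have T2: "(\<Sum>j\<in>{1..<p}. gnorm d (\<lambda>k. bt j k - bt (j-1) k) powr (-\<gamma>) * gnorm d (\<lambda>k. b0 j k - b0 (j-1) k))
      - (\<Sum>j\<in>{1..<p}. gnorm d (\<lambda>k. bt j k - bt (j-1) k) powr (-\<gamma>)
           * gnorm d (\<lambda>k. (b0 j k + x j k) - (b0 (j-1) k + x (j-1) k))) \<le> W2 * (2 * R)"
    by simp
  have "m1 * (W1 * R) + m2 * (W2 * (2 * R)) \<le> (m1 + m2) * (W1 + W2) * (2 * R)"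
    using m W R0 by (simp add: algebra_simps add_mono mult_left_mono mult_right_mono)
  moreover note mult_left_mono[OF T1 m(1)] mult_left_mono[OF T2 m(2)]
  ultimately show ?thesis
    unfolding Qn_def weight_bound_def W1_def[symmetric] W2_def[symmetric] by (simp add: right_diff_distrib)
qed

lemma exists_block_radius:
  fixes b :: "nat \<Rightarrow> nat \<Rightarrow> real"
  shows "\<exists>\<rho>>0. (\<forall>j<p. gnorm d (b j) \<noteq> 0 \<longrightarrow> \<rho> \<le> gnorm d (b j) / 4) \<and>
     (\<forall>j<p. 1 \<le> j \<longrightarrow> gnorm d (\<lambda>k. b j k - b (j-1) k) \<noteq> 0 \<longrightarrow> \<rho> \<le> gnorm d (\<lambda>k. b j k - b (j-1) k) / 4)"
proof -
  define S where "S = insert 1 ((\<lambda>j. gnorm d (b j) / 4) ` {j. j < p \<and> gnorm d (b j) \<noteq> 0}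
      \<union> (\<lambda>j. gnorm d (\<lambda>k. b j k - b (j-1) k) / 4) ` {j. j < p \<and> 1 \<le> j \<and> gnorm d (\<lambda>k. b j k - b (j-1) k) \<noteq> 0})"
  have fin: "finite {j. j < p \<and> P j}" for P by (rule finite_subset[of _ "{..<p}"]) auto
  have S: "finite S" "S \<noteq> {}" unfolding S_def using fin by auto
  have "\<forall>s\<in>S. s > 0"
    unfolding S_def using gnorm_nonneg by (auto simp: order.strict_iff_order)
  then have "Min S > 0" using S by simp
  moreover have "Min S \<le> gnorm d (b j) / 4" if "j < p" "gnorm d (b j) \<noteq> 0" for j
    using S(1) that by (intro Min_le) (auto simp: S_def)
  moreover have "Min S \<le> gnorm d (\<lambda>k. b j k - b (j-1) k) / 4"
    if "j < p" "1 \<le> j" "gnorm d (\<lambda>k. b j k - b (j-1) k) \<noteq> 0" for j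
    using S(1) that by (intro Min_le) (auto simp: S_def)
  ultimately show ?thesis by blast
qed

lemma convex_minimizer_within_radius:
  fixes Obj :: "(nat \<Rightarrow> nat \<Rightarrow> real) \<Rightarrow> real"
  assumes s: "s > 0" and C: "C > 0"
    and conv: "\<And>l a b. 0 \<le> l \<Longrightarrow> l \<le> 1 \<Longrightarrow>
                 Obj (\<lambda>j k. (1-l) * a j k + l * b j k) \<le> (1-l) * Obj a + l * Obj b"
    and min: "Obj b \<le> Obj b0"
    and sphere: "\<And>v. pnorm p d v = C \<Longrightarrow> Obj (\<lambda>j k. b0 j k + v j k / s) > Obj b0"
  shows "s * pnorm p d (\<lambda>j k. b j k - b0 j k) \<le> C"
proof (rule ccontr)
  assume "\<not> ?thesis"
  then have big: "s * pnorm p d (\<lambda>j k. b j k - b0 j k) > C" by simp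
  define \<rho> where "\<rho> = pnorm p d (\<lambda>j k. b j k - b0 j k)"
  have \<rho>: "\<rho> > 0" using big C s unfolding \<rho>_def
    by (metis mult_zero_right not_less_iff_gr_or_eq order.strict_trans pnorm_nonneg order_le_less)
  define l where "l = C / (s * \<rho>)"
  have l: "0 < l" "l < 1" unfolding l_def using C s \<rho> big \<rho>_def by simp_all
  define v where "v = (\<lambda>j k. (s * l) * (b j k - b0 j k))"
  have "pnorm p d v = C"
    unfolding v_def pnorm_scale \<rho>_def[symmetric] using s l \<rho> C by (simp add: l_def)
  then have "Obj b0 < Obj (\<lambda>j k. b0 j k + v j k / s)" by (rule sphere)
  also have "(\<lambda>j k. b0 j k + v j k / s) = (\<lambda>j k. (1-l) * b0 j k + l * b j k)"
    using s by (intro ext) (simp add: v_def field_simps)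
  also have "Obj \<dots> \<le> (1-l) * Obj b0 + l * Obj b" using l by (intro conv) auto
  also have "\<dots> \<le> (1-l) * Obj b0 + l * Obj b0" using min l by (intro add_left_mono mult_left_mono) auto
  finally show False by (simp add: algebra_simps)
qed

section \<open>Errors whose density is positive at zero\<close>

lemma (in prob_space) integrable_bounded:
  fixes g :: "'a \<Rightarrow> real"
  assumes "g \<in> borel_measurable M" "\<And>x. x \<in> space M \<Longrightarrow> \<bar>g x\<bar> \<le> B"
  shows "integrable M g"
  using assms by (intro integrable_const_bound[where B=B]) auto

lemma (in prob_space) abs_expectation_le:
  fixes g :: "'a \<Rightarrow> real"
  assumes "integrable M g" "\<And>x. x \<in> space M \<Longrightarrow> \<bar>g x\<bar> \<le> B"
  shows "\<bar>expectation g\<bar> \<le> B"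
proof -
  have "\<bar>expectation g\<bar> \<le> expectation (\<lambda>x. \<bar>g x\<bar>)"
    using integral_norm_bound[of M g] by simp
  also have "\<dots> \<le> expectation (\<lambda>x. B)"
    using assms by (intro integral_mono) auto
  finally show ?thesis by (simp add: prob_space)
qed

locale iid_errors = prob_space M for M :: "'a measure" +
  fixes eps :: "nat \<Rightarrow> 'a \<Rightarrow> real" and f :: "real \<Rightarrow> real" and \<tau> :: real
  assumes indep: "indep_vars (\<lambda>_. borel) eps UNIV"
    and ident: "\<forall>i. distr M borel (eps i) = distr M borel (eps 0)"
    and dens: "distributed M lborel (eps 0) (\<lambda>x. ennreal (f x))"
    and f_cont: "isCont f 0" and f_pos: "f 0 > 0"
    and F0: "measure M {\<omega>\<in>space M. eps 0 \<omega> \<le> 0} = \<tau>"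
    and tau: "0 < \<tau>" "\<tau> < 1"
begin

lemma eps_measurable [measurable]: "eps i \<in> borel_measurable M"
  using indep unfolding indep_vars_def by auto

lemma prob_eps_eq_prob_eps0:
  assumes "A \<in> sets borel"
  shows "prob {\<omega>\<in>space M. eps i \<omega> \<in> A} = prob {\<omega>\<in>space M. eps 0 \<omega> \<in> A}"
proof -
  have "prob {\<omega>\<in>space M. eps i \<omega> \<in> A} = measure (distr M borel (eps i)) A"
    using assms by (subst measure_distr) (auto intro!: arg_cong[where f="measure M"])
  also have "\<dots> = measure (distr M borel (eps 0)) A" using ident by metis
  also have "\<dots> = prob {\<omega>\<in>space M. eps 0 \<omega> \<in> A}"
    using assms by (subst measure_distr) (auto intro!: arg_cong[where f="measure M"])
  finally show ?thesis .
qed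

lemma density_near_zero_bounds_ex:
  "\<exists>\<delta>>0. \<forall>x. \<bar>x\<bar> < \<delta> \<longrightarrow> f 0/2 \<le> f x \<and> f x \<le> 2 * f 0"
proof -
  obtain \<delta> where \<delta>: "\<delta> > 0" "\<And>x. dist x 0 < \<delta> \<Longrightarrow> dist (f x) (f 0) < f 0/2"
    using f_cont f_pos unfolding continuous_at_eps_delta by (metis half_gt_zero)
  have "f 0/2 \<le> f x \<and> f x \<le> 2 * f 0" if "\<bar>x\<bar> < \<delta>" for x
    using \<delta>(2)[of x] that f_pos by (auto simp: dist_real_def abs_if split: if_splits)
  then show ?thesis using \<delta>(1) by blast
qed

definition dens_radius :: real where
  "dens_radius = (SOME \<delta>. \<delta> > 0 \<and> (\<forall>x. \<bar>x\<bar> < \<delta> \<longrightarrow> f 0/2 \<le> f x \<and> f x \<le> 2 * f 0))"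

lemma dens_radius:
  "dens_radius > 0"
  "\<bar>x\<bar> < dens_radius \<Longrightarrow> f 0/2 \<le> f x"
  "\<bar>x\<bar> < dens_radius \<Longrightarrow> f x \<le> 2 * f 0"
  using someI_ex[OF density_near_zero_bounds_ex] unfolding dens_radius_def[symmetric] by auto

lemma prob_eps0_interval:
  assumes "a \<le> b" "-dens_radius < a" "b < dens_radius"
  shows "prob {\<omega>\<in>space M. eps 0 \<omega> \<in> {a..b}} \<ge> (b - a) * (f 0/2)"
    and "prob {\<omega>\<in>space M. eps 0 \<omega> \<in> {a..b}} \<le> (b - a) * (2 * f 0)"
proof -
  have "emeasure M (eps 0 -` {a..b} \<inter> space M) = (\<integral>\<^sup>+x. ennreal (f x) * indicator {a..b} x \<partial>lborel)"
    by (rule distributed_emeasure[OF dens]) auto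
  moreover have "eps 0 -` {a..b} \<inter> space M = {\<omega>\<in>space M. eps 0 \<omega> \<in> {a..b}}" by auto
  ultimately have P: "ennreal (prob {\<omega>\<in>space M. eps 0 \<omega> \<in> {a..b}})
      = (\<integral>\<^sup>+x. ennreal (f x) * indicator {a..b} x \<partial>lborel)"
    by (simp add: emeasure_eq_measure)
  have box: "(\<integral>\<^sup>+x. ennreal c * indicator {a..b} x \<partial>lborel) = ennreal ((b - a) * c)" if "c \<ge> 0" for c
    using assms that by (subst nn_integral_cmult_indicator) (auto simp: ennreal_mult[symmetric] mult.commute)
  have "(\<integral>\<^sup>+x. ennreal (f 0/2) * indicator {a..b} x \<partial>lborel) \<le> (\<integral>\<^sup>+x. ennreal (f x) * indicator {a..b} x \<partial>lborel)"
    using dens_radius(2) assms by (intro nn_integral_mono) (auto simp: indicator_def intro: ennreal_leI)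
  then show "prob {\<omega>\<in>space M. eps 0 \<omega> \<in> {a..b}} \<ge> (b - a) * (f 0/2)"
    unfolding P[symmetric] box[OF less_imp_le[OF half_gt_zero[OF f_pos]]]
    by (subst (asm) ennreal_le_iff) auto
  have "(\<integral>\<^sup>+x. ennreal (f x) * indicator {a..b} x \<partial>lborel) \<le> (\<integral>\<^sup>+x. ennreal (2 * f 0) * indicator {a..b} x \<partial>lborel)"
    using dens_radius(3) assms by (intro nn_integral_mono) (auto simp: indicator_def intro: ennreal_leI)
  then show "prob {\<omega>\<in>space M. eps 0 \<omega> \<in> {a..b}} \<le> (b - a) * (2 * f 0)"
    unfolding P[symmetric] using f_pos assms by (subst (asm) box) (auto simp: ennreal_le_iff)
qed

lemma prob_eps_interval:
  assumes "a \<le> b" "-dens_radius < a" "b < dens_radius"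
  shows "prob {\<omega>\<in>space M. eps i \<omega> \<in> {a..b}} \<ge> (b - a) * (f 0/2)"
    and "prob {\<omega>\<in>space M. eps i \<omega> \<in> {a..b}} \<le> (b - a) * (2 * f 0)"
  using prob_eps0_interval[OF assms] prob_eps_eq_prob_eps0[of "{a..b}" i] by auto

lemma prob_eps_neg: "prob {\<omega>\<in>space M. eps i \<omega> < 0} = \<tau>"
proof -
  have z: "prob {\<omega>\<in>space M. eps 0 \<omega> \<in> {0..0}} = 0"
    using prob_eps0_interval(2)[of 0 0] dens_radius(1) by (auto intro: antisym)
  have "{\<omega>\<in>space M. eps 0 \<omega> \<in> {..0}} = {\<omega>\<in>space M. eps 0 \<omega> \<in> {..<0}} \<union> {\<omega>\<in>space M. eps 0 \<omega> \<in> {0..0}}"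
    by auto
  then have "prob {\<omega>\<in>space M. eps 0 \<omega> \<in> {..0}}
      = prob {\<omega>\<in>space M. eps 0 \<omega> \<in> {..<0}} + prob {\<omega>\<in>space M. eps 0 \<omega> \<in> {0..0}}"
    by (simp only:) (rule finite_measure_Union, auto)
  then have "prob {\<omega>\<in>space M. eps 0 \<omega> \<in> {..<0}} = \<tau>" using z F0 by simp
  then show ?thesis using prob_eps_eq_prob_eps0[of "{..<0}" i] by simp
qed

lemma expectation_indicator_eps:
  assumes "A \<in> sets borel"
  shows "expectation (\<lambda>\<omega>. of_bool (eps i \<omega> \<in> A)) = prob {\<omega>\<in>space M. eps i \<omega> \<in> A}"
proof -
  have "expectation (\<lambda>\<omega>. of_bool (eps i \<omega> \<in> A)) = expectation (indicator {\<omega>\<in>space M. eps i \<omega> \<in> A})"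
    by (rule Bochner_Integration.integral_cong) (auto simp: indicator_def)
  also have "\<dots> = prob {\<omega>\<in>space M. eps i \<omega> \<in> A}"
    by (simp add: Int_absorb2 Collect_subset[unfolded Collect_conj_eq])
  finally show ?thesis .
qed

lemma expectation_sign_term: "expectation (\<lambda>\<omega>. c * (\<tau> - of_bool (eps i \<omega> < 0))) = 0"
proof -
  have "expectation (\<lambda>\<omega>. of_bool (eps i \<omega> < 0)) = \<tau>"
    using expectation_indicator_eps[of "{..<0}" i] prob_eps_neg[of i] by simp
  moreover have "integrable M (\<lambda>\<omega>. of_bool (eps i \<omega> < 0) :: real)"
    by (rule integrable_bounded[where B=1]) auto
  ultimately show ?thesis by (simp add: prob_space)
qed

lemma integrable_knight_rem: "integrable M (\<lambda>\<omega>. knight_rem (eps i \<omega>) t)"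
  by (rule integrable_bounded[where B="\<bar>t\<bar>"]) (use knight_rem_le_abs knight_rem_nonneg in auto)

lemma expectation_knight_rem_ge:
  assumes "\<bar>t\<bar> < dens_radius"
  shows "expectation (\<lambda>\<omega>. knight_rem (eps i \<omega>) t) \<ge> f 0 * t^2 / 16"
proof -
  define J where "J = (if t > 0 then {t/4..t/2} else {t/2..t/4})"
  have J [measurable]: "J \<in> sets borel" by (simp add: J_def)
  have "prob {\<omega>\<in>space M. eps i \<omega> \<in> J} \<ge> (\<bar>t\<bar>/4) * (f 0/2)"
    using prob_eps_interval(1)[of "t/4" "t/2" i] prob_eps_interval(1)[of "t/2" "t/4" i] assms
    by (auto simp: J_def)
  then have "(\<bar>t\<bar>/2) * ((\<bar>t\<bar>/4) * (f 0/2)) \<le> (\<bar>t\<bar>/2) * prob {\<omega>\<in>space M. eps i \<omega> \<in> J}"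
    by (rule mult_left_mono) simp
  moreover have "(\<bar>t\<bar>/2) * ((\<bar>t\<bar>/4) * (f 0/2)) = f 0 * (\<bar>t\<bar> * \<bar>t\<bar>) / 16" by simp
  ultimately have "f 0 * t^2 / 16 \<le> (\<bar>t\<bar>/2) * prob {\<omega>\<in>space M. eps i \<omega> \<in> J}"
    by (simp add: power2_eq_square)
  also have "\<dots> = expectation (\<lambda>\<omega>. (\<bar>t\<bar>/2) * of_bool (eps i \<omega> \<in> J))"
    using expectation_indicator_eps[OF J, of i] by simp
  also have "\<dots> \<le> expectation (\<lambda>\<omega>. knight_rem (eps i \<omega>) t)"
    using knight_rem_ge_half[of _ t] knight_rem_nonneg
    by (intro integral_mono integrable_knight_rem integrable_bounded[where B="\<bar>t\<bar>/2"])
       (auto simp: J_def)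
  finally show ?thesis .
qed

lemma expectation_abs_eps_le:
  assumes "0 \<le> h" "h < dens_radius"
  shows "expectation (\<lambda>\<omega>. of_bool (\<bar>eps i \<omega>\<bar> \<le> h)) \<le> 4 * f 0 * h"
proof -
  have "expectation (\<lambda>\<omega>. of_bool (\<bar>eps i \<omega>\<bar> \<le> h)) = expectation (\<lambda>\<omega>. of_bool (eps i \<omega> \<in> {-h..h}))"
    by (rule Bochner_Integration.integral_cong) (auto simp: abs_le_iff)
  also have "\<dots> = prob {\<omega>\<in>space M. eps i \<omega> \<in> {-h..h}}" by (rule expectation_indicator_eps) simp
  also have "\<dots> \<le> (h - (-h)) * (2 * f 0)" using prob_eps_interval(2)[of "-h" h i] assms by simp
  finally show ?thesis by (simp add: mult_ac)
qed

lemma integrable_check_fun_diff: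
  "integrable M (\<lambda>\<omega>. check_fun \<tau> (eps i \<omega> - t) - check_fun \<tau> (eps i \<omega>))"
proof (rule integrable_bounded[where B="\<bar>t\<bar>"])
  fix \<omega> show "\<bar>check_fun \<tau> (eps i \<omega> - t) - check_fun \<tau> (eps i \<omega>)\<bar> \<le> \<bar>t\<bar>"
    using check_fun_Lipschitz[OF tau, of "eps i \<omega> - t" "eps i \<omega>"] by simp
qed measurable

lemma expectation_check_fun_diff:
  "expectation (\<lambda>\<omega>. check_fun \<tau> (eps i \<omega> - t) - check_fun \<tau> (eps i \<omega>))
     = expectation (\<lambda>\<omega>. knight_rem (eps i \<omega>) t)"
proof -
  have "integrable M (\<lambda>\<omega>. (-t) * (\<tau> - of_bool (eps i \<omega> < 0)))"
    using tau by (intro integrable_mult_right integrable_bounded[where B=2]) auto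
  then have "expectation (\<lambda>\<omega>. check_fun \<tau> (eps i \<omega> - t) - check_fun \<tau> (eps i \<omega>))
      = expectation (\<lambda>\<omega>. (-t) * (\<tau> - of_bool (eps i \<omega> < 0))) + expectation (\<lambda>\<omega>. knight_rem (eps i \<omega>) t)"
    by (simp add: check_fun_diff_eq Bochner_Integration.integral_add integrable_knight_rem)
  then show ?thesis using expectation_sign_term[of "-t" i] by simp
qed

lemma expectation_square_indep_sum:
  fixes h :: "nat \<Rightarrow> real \<Rightarrow> real"
  assumes hm [measurable]: "\<And>i. h i \<in> borel_measurable borel"
    and hb: "\<And>i x. \<bar>h i x\<bar> \<le> B i"
    and h0: "\<And>i. expectation (\<lambda>\<omega>. h i (eps i \<omega>)) = 0"
    and fin: "finite I"
  shows "expectation (\<lambda>\<omega>. (\<Sum>i\<in>I. h i (eps i \<omega>))^2) = (\<Sum>i\<in>I. expectation (\<lambda>\<omega>. (h i (eps i \<omega>))^2))"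
    and "integrable M (\<lambda>\<omega>. (\<Sum>i\<in>I. h i (eps i \<omega>))^2)"
proof -
  have intY: "integrable M (\<lambda>\<omega>. h i (eps i \<omega>))" for i
    by (rule integrable_bounded[where B="B i"]) (auto simp: hb)
  have intYY: "integrable M (\<lambda>\<omega>. h i (eps i \<omega>) * h j (eps j \<omega>))" for i j
    unfolding abs_mult
    by (rule integrable_bounded[where B="B i * B j"])
       (auto simp: abs_mult intro!: mult_mono hb order.trans[OF abs_ge_zero hb])
  have sq: "(\<Sum>i\<in>I. h i (eps i \<omega>))^2 = (\<Sum>i\<in>I. \<Sum>j\<in>I. h i (eps i \<omega>) * h j (eps j \<omega>))" for \<omega>
    by (simp add: power2_eq_square sum_product)
  show "integrable M (\<lambda>\<omega>. (\<Sum>i\<in>I. h i (eps i \<omega>))^2)"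
    unfolding sq by (intro Bochner_Integration.integrable_sum intYY)
  have cross: "expectation (\<lambda>\<omega>. h i (eps i \<omega>) * h j (eps j \<omega>))
      = (if i = j then expectation (\<lambda>\<omega>. (h i (eps i \<omega>))^2) else 0)" for i j
  proof (cases "i = j")
    case False
    have "indep_vars (\<lambda>_. borel) (\<lambda>k \<omega>. h k (eps k \<omega>)) UNIV"
      by (rule indep_vars_compose2[OF indep]) simp
    then have "indep_vars (\<lambda>_. borel) (\<lambda>k \<omega>. h k (eps k \<omega>)) {i, j}"
      by (rule indep_vars_subset) auto
    then have "expectation (\<lambda>\<omega>. \<Prod>k\<in>{i,j}. h k (eps k \<omega>)) = (\<Prod>k\<in>{i,j}. expectation (\<lambda>\<omega>. h k (eps k \<omega>)))"
      by (intro indep_vars_lebesgue_integral) (auto intro: intY)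
    then show ?thesis using False h0 by simp
  qed (simp add: power2_eq_square)
  have "expectation (\<lambda>\<omega>. (\<Sum>i\<in>I. h i (eps i \<omega>))^2)
      = (\<Sum>i\<in>I. \<Sum>j\<in>I. expectation (\<lambda>\<omega>. h i (eps i \<omega>) * h j (eps j \<omega>)))"
    unfolding sq by (simp add: Bochner_Integration.integral_sum Bochner_Integration.integrable_sum intYY)
  also have "\<dots> = (\<Sum>i\<in>I. expectation (\<lambda>\<omega>. (h i (eps i \<omega>))^2))"
    unfolding cross using fin by (simp add: sum.delta)
  finally show "expectation (\<lambda>\<omega>. (\<Sum>i\<in>I. h i (eps i \<omega>))^2) = (\<Sum>i\<in>I. expectation (\<lambda>\<omega>. (h i (eps i \<omega>))^2))" .
qed

lemma Chebyshev_indep_sum: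
  fixes h :: "nat \<Rightarrow> real \<Rightarrow> real"
  assumes hm [measurable]: "\<And>i. h i \<in> borel_measurable borel"
    and hb: "\<And>i x. \<bar>h i x\<bar> \<le> B i"
    and h0: "\<And>i. expectation (\<lambda>\<omega>. h i (eps i \<omega>)) = 0"
    and fin: "finite I" and a: "a > 0"
    and V: "\<And>i. i \<in> I \<Longrightarrow> expectation (\<lambda>\<omega>. (h i (eps i \<omega>))^2) \<le> V i"
  shows "prob {\<omega>\<in>space M. a \<le> \<bar>\<Sum>i\<in>I. h i (eps i \<omega>)\<bar>} \<le> (\<Sum>i\<in>I. V i) / a^2"
proof -
  have "{\<omega>\<in>space M. a \<le> \<bar>\<Sum>i\<in>I. h i (eps i \<omega>)\<bar>} = {\<omega>\<in>space M. a^2 \<le> (\<Sum>i\<in>I. h i (eps i \<omega>))^2}"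
    using abs_le_square_iff[of a] a by auto
  also have "prob \<dots> \<le> expectation (\<lambda>\<omega>. (\<Sum>i\<in>I. h i (eps i \<omega>))^2) / a^2"
    using a by (intro integral_Markov_inequality_measure[where A="space M"]
                  expectation_square_indep_sum(2)[OF hm hb h0 fin]) auto
  also have "\<dots> \<le> (\<Sum>i\<in>I. V i) / a^2"
    unfolding expectation_square_indep_sum(1)[OF hm hb h0 fin] using a
    by (intro divide_right_mono sum_mono V) auto
  finally show ?thesis .
qed

end

section \<open>The local loss increment\<close>

lemma pos_def_quadratic_form_ge:
  fixes U :: "'i \<Rightarrow> 'i \<Rightarrow> real"
  assumes fin: "finite I" and ne: "I \<noteq> {}" and pd: "pos_def I U"
  shows "\<exists>c>0. \<forall>v. (\<Sum>a\<in>I. \<Sum>b\<in>I. v a * U a b * v b) \<ge> c * (\<Sum>a\<in>I. (v a)^2)"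
proof -
  define q where "q v = (\<Sum>a\<in>I. \<Sum>b\<in>I. v a * U a b * v b)" for v :: "'i \<Rightarrow> real"
  define S where "S a = (if a \<in> I then {-1..1} else {0::real})" for a
  define K where "K = Pi\<^sub>E UNIV S \<inter> {v. (\<Sum>a\<in>I. (v a)^2) = 1}"
  have "compact (Pi\<^sub>E UNIV S)"
    unfolding compactin_euclidean_iff[symmetric] euclidean_product_topology[symmetric]
    by (subst compactin_PiE) (auto simp: S_def)
  moreover have "closed {v::'i\<Rightarrow>real. (\<Sum>a\<in>I. (v a)^2) = 1}"
    by (intro closed_Collect_eq continuous_on_const continuous_intros continuous_on_product_coordinates)
  ultimately have cK: "compact K" unfolding K_def by blast
  obtain a0 where a0: "a0 \<in> I" using ne by auto
  have "(\<Sum>a\<in>I. ((\<lambda>a. if a = a0 then 1 else 0::real) a)^2) = (\<Sum>a\<in>I. if a = a0 then 1 else 0)"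
    by (rule sum.cong) auto
  then have "(\<lambda>a. if a = a0 then 1 else 0::real) \<in> K"
    unfolding K_def S_def using a0 fin by auto
  then have Kne: "K \<noteq> {}" by auto
  have cq: "continuous_on K q" unfolding q_def
    by (intro continuous_intros continuous_on_product_coordinates[THEN continuous_on_subset]) auto
  obtain v0 where v0: "v0 \<in> K" "\<And>y. y \<in> K \<Longrightarrow> q v0 \<le> q y"
    using continuous_attains_inf[OF cK Kne cq] by auto
  have "\<exists>a\<in>I. v0 a \<noteq> 0"
  proof (rule ccontr)
    assume "\<not> ?thesis"
    then have "(\<Sum>a\<in>I. (v0 a)^2) = 0" by simp
    with v0(1) show False unfolding K_def by simp
  qed
  then have qpos: "q v0 > 0" using pd unfolding pos_def_def q_def by blast
  show ?thesis
  proof (intro exI[of _ "q v0"] conjI allI qpos)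
    fix v :: "'i \<Rightarrow> real"
    define s where "s = (\<Sum>a\<in>I. (v a)^2)"
    have s0: "s \<ge> 0" unfolding s_def by (intro sum_nonneg) auto
    show "q v0 * (\<Sum>a\<in>I. (v a)^2) \<le> (\<Sum>a\<in>I. \<Sum>b\<in>I. v a * U a b * v b)"
    proof (cases "s = 0")
      case True
      then have "\<forall>a\<in>I. v a = 0" unfolding s_def using fin by (simp add: sum_nonneg_eq_0_iff)
      then show ?thesis using True by (simp add: s_def)
    next
      case False
      then have sp: "s > 0" using s0 by auto
      define w where "w a = (if a \<in> I then v a / sqrt s else 0)" for a
      have sw: "(\<Sum>a\<in>I. (w a)^2) = 1"
        using sp by (simp add: w_def power_divide sum_divide_distrib[symmetric] s_def[symmetric])
      have "-1 \<le> w a \<and> w a \<le> 1" if "a \<in> I" for a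
      proof -
        have "(w a)^2 \<le> (\<Sum>a\<in>I. (w a)^2)"
          by (rule member_le_sum) (use that fin in auto)
        then have "\<bar>w a\<bar> \<le> 1" using sw abs_le_square_iff[of "w a" 1] by simp
        then show ?thesis by (simp add: abs_le_iff)
      qed
      then have "w \<in> K" unfolding K_def S_def using sw by (auto simp: w_def)
      then have "q v0 \<le> q w" by (rule v0(2))
      also have "q w = q v / s"
        unfolding q_def w_def using sp
        by (simp add: sum_divide_distrib power2_eq_square cong: sum.cong)
      finally have "q v0 * s \<le> q v" using sp by (simp add: field_simps)
      then show ?thesis by (simp add: q_def s_def)
    qed
  qed
qed

locale quantile_design = iid_errors M eps f \<tau> for M :: "'a measure" and eps f \<tau> +
  fixes p d :: nat and X :: "nat \<Rightarrow> nat \<Rightarrow> nat \<Rightarrow> real"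
    and U :: "nat \<times> nat \<Rightarrow> nat \<times> nat \<Rightarrow> real"
  assumes pd: "p \<ge> 1" "d \<ge> 1"
    and U_pos_def: "pos_def (idx p d) U"
    and gram_lim: "\<forall>a\<in>idx p d. \<forall>c\<in>idx p d. (\<lambda>n. gram n X a c) \<longlonglongrightarrow> U a c"
    and A3: "(\<lambda>n. Max ((\<lambda>i. pnorm p d (X i)) ` {..<n}) / sqrt (real n)) \<longlonglongrightarrow> 0"
begin

definition qform :: "(nat \<times> nat \<Rightarrow> nat \<times> nat \<Rightarrow> real) \<Rightarrow> (nat \<Rightarrow> nat \<Rightarrow> real) \<Rightarrow> real" where
  "qform A v = (\<Sum>a\<in>idx p d. \<Sum>c\<in>idx p d. coord v a * A a c * coord v c)"

definition mean_sq_norm :: "nat \<Rightarrow> real" where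
  "mean_sq_norm n = (\<Sum>i<n. (pnorm p d (X i))^2) / n"

lemma mean_sq_norm_nonneg: "mean_sq_norm n \<ge> 0"
  by (simp add: mean_sq_norm_def sum_nonneg)

lemma sum_sq_lin_eq_qform_gram:
  assumes "n > 0"
  shows "(\<Sum>i<n. (lin p d (X i) v / sqrt n)^2) = qform (gram n X) v"
proof -
  have "(\<Sum>i<n. (lin p d (X i) v / sqrt n)^2) = (\<Sum>i<n. (lin p d (X i) v)^2) / n"
    using assms by (simp add: power_divide sum_divide_distrib)
  also have "(\<Sum>i<n. (lin p d (X i) v)^2)
      = (\<Sum>i<n. \<Sum>a\<in>idx p d. \<Sum>c\<in>idx p d. coord v a * (coord (X i) a * coord (X i) c) * coord v c)"
    unfolding lin_eq_sum_idx power2_eq_square sum_product by (simp add: mult_ac)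
  also have "\<dots> = (\<Sum>a\<in>idx p d. \<Sum>c\<in>idx p d. coord v a * (\<Sum>i<n. coord (X i) a * coord (X i) c) * coord v c)"
    by (subst sum.swap) (simp add: sum.swap[of _ "{..<n}"] sum_distrib_left sum_distrib_right)
  finally show ?thesis
    unfolding qform_def gram_def by (simp add: sum_divide_distrib[symmetric] coord_def mult_ac)
qed

lemma qform_gram_le:
  assumes n: "n > 0"
  shows "qform (gram n X) w \<le> mean_sq_norm n * (pnorm p d w)^2"
proof -
  have "qform (gram n X) w = (\<Sum>i<n. (lin p d (X i) w / sqrt n)^2)"
    by (rule sum_sq_lin_eq_qform_gram[OF n, symmetric])
  also have "\<dots> \<le> (\<Sum>i<n. (pnorm p d (X i) * pnorm p d w)^2 / n)"
  proof (rule sum_mono)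
    fix i
    have "\<bar>lin p d (X i) w\<bar>^2 \<le> (pnorm p d (X i) * pnorm p d w)^2"
      by (rule power_mono[OF abs_lin_le_pnorm_mult]) simp
    then show "(lin p d (X i) w / sqrt n)^2 \<le> (pnorm p d (X i) * pnorm p d w)^2 / n"
      using n by (simp add: power_divide divide_right_mono)
  qed
  also have "\<dots> = mean_sq_norm n * (pnorm p d w)^2"
    by (simp add: mean_sq_norm_def power_mult_distrib sum_divide_distrib sum_distrib_right)
  finally show ?thesis .
qed

lemma abs_qform_diff_le:
  "\<bar>qform A v - qform B v\<bar> \<le> (pnorm p d v)^2 * (\<Sum>a\<in>idx p d. \<Sum>c\<in>idx p d. \<bar>A a c - B a c\<bar>)"
proof -
  have "\<bar>qform A v - qform B v\<bar> = \<bar>\<Sum>a\<in>idx p d. \<Sum>c\<in>idx p d. coord v a * (A a c - B a c) * coord v c\<bar>"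
    unfolding qform_def by (simp add: sum_subtractf[symmetric] algebra_simps)
  also have "\<dots> \<le> (\<Sum>a\<in>idx p d. \<Sum>c\<in>idx p d. \<bar>coord v a * (A a c - B a c) * coord v c\<bar>)"
    by (rule order.trans[OF sum_abs sum_mono[OF sum_abs]])
  also have "\<dots> \<le> (\<Sum>a\<in>idx p d. \<Sum>c\<in>idx p d. (pnorm p d v)^2 * \<bar>A a c - B a c\<bar>)"
  proof (intro sum_mono)
    fix a c assume "a \<in> idx p d" "c \<in> idx p d"
    then have "\<bar>coord v a\<bar> * \<bar>coord v c\<bar> \<le> pnorm p d v * pnorm p d v"
      by (intro mult_mono abs_coord_le_pnorm) auto
    then have "(\<bar>coord v a\<bar> * \<bar>coord v c\<bar>) * \<bar>A a c - B a c\<bar> \<le> (pnorm p d v * pnorm p d v) * \<bar>A a c - B a c\<bar>"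
      by (rule mult_right_mono) simp
    then show "\<bar>coord v a * (A a c - B a c) * coord v c\<bar> \<le> (pnorm p d v)^2 * \<bar>A a c - B a c\<bar>"
      by (simp add: abs_mult power2_eq_square mult_ac)
  qed
  finally show ?thesis by (simp add: sum_distrib_left)
qed

definition coerc :: real where
  "coerc = (SOME c. c > 0 \<and> (\<forall>v. (\<Sum>a\<in>idx p d. \<Sum>b\<in>idx p d. v a * U a b * v b) \<ge> c * (\<Sum>a\<in>idx p d. (v a)^2)))"

lemma coerc: "coerc > 0" "qform U v \<ge> coerc * (pnorm p d v)^2"
proof -
  note ex = pos_def_quadratic_form_ge[OF finite_idx idx_nonempty[OF pd] U_pos_def]
  note * = someI_ex[OF ex, folded coerc_def]
  show "coerc > 0" using * by blast
  show "qform U v \<ge> coerc * (pnorm p d v)^2" using * unfolding qform_def pnorm_power2 by blast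
qed

lemma eventually_qform_gram_ge:
  "eventually (\<lambda>n. \<forall>v. qform (gram n X) v \<ge> (coerc/2) * (pnorm p d v)^2) sequentially"
proof -
  have "((\<lambda>n. \<Sum>a\<in>idx p d. \<Sum>c\<in>idx p d. \<bar>gram n X a c - U a c\<bar>)
      \<longlongrightarrow> (\<Sum>a\<in>idx p d. \<Sum>c\<in>idx p d. \<bar>U a c - U a c\<bar>)) sequentially"
    using gram_lim by (intro tendsto_sum tendsto_rabs tendsto_diff tendsto_const) auto
  then have "eventually (\<lambda>n. (\<Sum>a\<in>idx p d. \<Sum>c\<in>idx p d. \<bar>gram n X a c - U a c\<bar>) < coerc/2) sequentially"
    using coerc(1) by (intro order_tendstoD) auto
  then show ?thesis
  proof (rule eventually_mono, intro allI)
    fix n v assume "(\<Sum>a\<in>idx p d. \<Sum>c\<in>idx p d. \<bar>gram n X a c - U a c\<bar>) < coerc/2"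
    then have "\<bar>qform (gram n X) v - qform U v\<bar> \<le> (pnorm p d v)^2 * (coerc/2)"
      by (intro order.trans[OF abs_qform_diff_le] mult_left_mono) auto
    moreover have "(pnorm p d v)^2 * (coerc/2) = coerc/2 * (pnorm p d v)^2"
      and "coerc * (pnorm p d v)^2 = 2 * (coerc/2 * (pnorm p d v)^2)" by simp_all
    ultimately show "qform (gram n X) v \<ge> (coerc/2) * (pnorm p d v)^2"
      using coerc(2)[of v] unfolding abs_le_iff by linarith
  qed
qed

definition trace_bound :: real where
  "trace_bound = (\<Sum>a\<in>idx p d. U a a) + 1"

lemma trace_bound_pos: "trace_bound > 0"
proof -
  have "U a a > 0" if a: "a \<in> idx p d" for a
  proof -
    define e where "e c = (if c = a then 1 else 0::real)" for c
    have "0 < (\<Sum>x\<in>idx p d. \<Sum>c\<in>idx p d. e x * U x c * e c)"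
      using a by (intro conjunct2[OF U_pos_def[unfolded pos_def_def], rule_format]) (auto simp: e_def)
    also have "\<dots> = (\<Sum>x\<in>idx p d. e x * U x a)"
    proof (rule sum.cong[OF refl])
      fix x
      have "(\<Sum>c\<in>idx p d. e x * U x c * e c) = (\<Sum>c\<in>idx p d. if c = a then e x * U x a else 0)"
        by (rule sum.cong) (auto simp: e_def)
      then show "(\<Sum>c\<in>idx p d. e x * U x c * e c) = e x * U x a" using a by simp
    qed
    also have "\<dots> = (\<Sum>x\<in>idx p d. if x = a then U a a else 0)"
      by (rule sum.cong) (auto simp: e_def)
    finally show ?thesis using a by simp
  qed
  then have "0 \<le> (\<Sum>a\<in>idx p d. U a a)" by (intro sum_nonneg less_imp_le)
  then show ?thesis unfolding trace_bound_def by simp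
qed

lemma eventually_mean_sq_norm_le: "eventually (\<lambda>n. mean_sq_norm n \<le> trace_bound) sequentially"
proof -
  have "mean_sq_norm n = (\<Sum>a\<in>idx p d. gram n X a a)" for n
    unfolding mean_sq_norm_def pnorm_power2 gram_def
    by (subst sum.swap) (simp add: sum_divide_distrib coord_def power2_eq_square)
  moreover have "((\<lambda>n. \<Sum>a\<in>idx p d. gram n X a a) \<longlongrightarrow> (\<Sum>a\<in>idx p d. U a a)) sequentially"
    using gram_lim by (intro tendsto_sum) auto
  then have "eventually (\<lambda>n. (\<Sum>a\<in>idx p d. gram n X a a) < trace_bound) sequentially"
    unfolding trace_bound_def by (rule order_tendstoD) simp
  ultimately show ?thesis by (simp add: eventually_mono)
qed

lemma eventually_max_norm_le:
  assumes "\<eta> > 0"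
  shows "eventually (\<lambda>n. \<forall>i<n. pnorm p d (X i) / sqrt n \<le> \<eta>) sequentially"
  using order_tendstoD(2)[OF A3 assms]
proof (rule eventually_mono, intro allI impI)
  fix n i assume h: "Max ((\<lambda>i. pnorm p d (X i)) ` {..<n}) / sqrt (real n) < \<eta>" and i: "i < n"
  have "pnorm p d (X i) \<le> Max ((\<lambda>i. pnorm p d (X i)) ` {..<n})" using i by (intro Max_ge) auto
  then have "pnorm p d (X i) / sqrt n \<le> Max ((\<lambda>i. pnorm p d (X i)) ` {..<n}) / sqrt n"
    by (rule divide_right_mono) simp
  then show "pnorm p d (X i) / sqrt n \<le> \<eta>" using h by simp
qed

text \<open>Local reparametrisation \<open>\<beta> = \<beta>0 + v/\<surd>n\<close>: \<open>res_shift n v i\<close> is the resulting shift of the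
  i-th residual and \<open>loss_incr n \<omega> v = G_n(\<beta>0 + v/\<surd>n) - G_n(\<beta>0)\<close>.\<close>

definition res_shift :: "nat \<Rightarrow> (nat \<Rightarrow> nat \<Rightarrow> real) \<Rightarrow> nat \<Rightarrow> real" where
  "res_shift n v i = lin p d (X i) v / sqrt (real n)"

definition loss_incr :: "nat \<Rightarrow> 'a \<Rightarrow> (nat \<Rightarrow> nat \<Rightarrow> real) \<Rightarrow> real" where
  "loss_incr n \<omega> v = (\<Sum>i<n. check_fun \<tau> (eps i \<omega> - res_shift n v i) - check_fun \<tau> (eps i \<omega>))"

definition score :: "nat \<Rightarrow> 'a \<Rightarrow> nat \<Rightarrow> nat \<Rightarrow> real" where
  "score n \<omega> = (\<lambda>j k. (\<Sum>i<n. X i j k * (\<tau> - of_bool (eps i \<omega> < 0))) / sqrt (real n))"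

definition near_zero_weight :: "nat \<Rightarrow> real \<Rightarrow> 'a \<Rightarrow> real" where
  "near_zero_weight n h \<omega> =
     (\<Sum>i<n. (pnorm p d (X i) / sqrt n) * of_bool (\<bar>eps i \<omega>\<bar> \<le> h * pnorm p d (X i) / sqrt n))"

lemma lin_score: "lin p d (score n \<omega>) v = (\<Sum>i<n. res_shift n v i * (\<tau> - of_bool (eps i \<omega> < 0)))"
  unfolding score_def res_shift_def lin_def
  by (simp add: sum_divide_distrib[symmetric] sum_distrib_left sum_distrib_right mult_ac
      sum.swap[of _ "{..<n}"])

lemma loss_incr_eq: "loss_incr n \<omega> v = - lin p d (score n \<omega>) v + (\<Sum>i<n. knight_rem (eps i \<omega>) (res_shift n v i))"
  unfolding loss_incr_def lin_score check_fun_diff_eq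
  by (simp add: sum.distrib sum_negf of_bool_def sum_subtractf)

lemma abs_res_shift_le: "\<bar>res_shift n v i\<bar> \<le> pnorm p d (X i) * pnorm p d v / sqrt n"
proof -
  have "\<bar>lin p d (X i) v / sqrt n\<bar> = \<bar>lin p d (X i) v\<bar> / sqrt n" by (simp add: abs_divide)
  then show ?thesis unfolding res_shift_def using divide_right_mono[OF abs_lin_le_pnorm_mult, of "sqrt n" p d "X i" v] by simp
qed

lemma res_shift_diff: "res_shift n v i - res_shift n w i = res_shift n (\<lambda>j k. v j k - w j k) i"
  unfolding res_shift_def by (simp add: lin_diff diff_divide_distrib)

lemma loss_incr_Lipschitz:
  assumes v: "pnorm p d v \<le> h" and w: "pnorm p d w \<le> h"
  shows "\<bar>loss_incr n \<omega> v - loss_incr n \<omega> w\<bar> \<le> pnorm p d (\<lambda>j k. v j k - w j k) * (pnorm p d (score n \<omega>) + near_zero_weight n h \<omega>)"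
proof -
  define u where "u = (\<lambda>j k. v j k - w j k)"
  have 1: "\<bar>lin p d (score n \<omega>) v - lin p d (score n \<omega>) w\<bar> \<le> pnorm p d (score n \<omega>) * pnorm p d u"
    unfolding u_def lin_diff[symmetric] by (rule abs_lin_le_pnorm_mult)
  have 2: "\<bar>knight_rem (eps i \<omega>) (res_shift n v i) - knight_rem (eps i \<omega>) (res_shift n w i)\<bar>
      \<le> pnorm p d u * ((pnorm p d (X i) / sqrt n) * of_bool (\<bar>eps i \<omega>\<bar> \<le> h * pnorm p d (X i) / sqrt n))" for i
  proof -
    have m: "max \<bar>res_shift n v i\<bar> \<bar>res_shift n w i\<bar> \<le> h * pnorm p d (X i) / sqrt n"
    proof -
      have "pnorm p d v * pnorm p d (X i) \<le> h * pnorm p d (X i)"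
        by (rule mult_right_mono) (use v in auto)
      then have "pnorm p d (X i) * pnorm p d v / sqrt n \<le> h * pnorm p d (X i) / sqrt n"
        by (simp add: divide_right_mono mult.commute)
      moreover have "pnorm p d w * pnorm p d (X i) \<le> h * pnorm p d (X i)"
        by (rule mult_right_mono) (use w in auto)
      then have "pnorm p d (X i) * pnorm p d w / sqrt n \<le> h * pnorm p d (X i) / sqrt n"
        by (simp add: divide_right_mono mult.commute)
      ultimately show ?thesis using abs_res_shift_le[of n v i] abs_res_shift_le[of n w i] by simp
    qed
    have d: "\<bar>res_shift n v i - res_shift n w i\<bar> \<le> pnorm p d (X i) * pnorm p d u / sqrt n"
      unfolding res_shift_diff u_def by (rule abs_res_shift_le)
    have "\<bar>knight_rem (eps i \<omega>) (res_shift n v i) - knight_rem (eps i \<omega>) (res_shift n w i)\<bar>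
        \<le> \<bar>res_shift n v i - res_shift n w i\<bar> * of_bool (\<bar>eps i \<omega>\<bar> \<le> max \<bar>res_shift n v i\<bar> \<bar>res_shift n w i\<bar>)"
      by (rule knight_rem_Lipschitz)
    also have "\<dots> \<le> (pnorm p d (X i) * pnorm p d u / sqrt n) * of_bool (\<bar>eps i \<omega>\<bar> \<le> h * pnorm p d (X i) / sqrt n)"
      using m d by (auto simp: of_bool_def)
    finally show ?thesis by (simp add: mult_ac)
  qed
  have "\<bar>loss_incr n \<omega> v - loss_incr n \<omega> w\<bar> \<le> \<bar>lin p d (score n \<omega>) v - lin p d (score n \<omega>) w\<bar>
      + \<bar>\<Sum>i<n. knight_rem (eps i \<omega>) (res_shift n v i) - knight_rem (eps i \<omega>) (res_shift n w i)\<bar>"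
    unfolding loss_incr_eq by (simp add: sum_subtractf)
  also have "\<dots> \<le> pnorm p d (score n \<omega>) * pnorm p d u
      + (\<Sum>i<n. pnorm p d u * ((pnorm p d (X i) / sqrt n) * of_bool (\<bar>eps i \<omega>\<bar> \<le> h * pnorm p d (X i) / sqrt n)))"
    by (intro add_mono 1 order.trans[OF sum_abs] sum_mono 2)
  also have "\<dots> = pnorm p d u * (pnorm p d (score n \<omega>) + near_zero_weight n h \<omega>)"
    unfolding near_zero_weight_def by (simp add: sum_distrib_left algebra_simps)
  finally show ?thesis unfolding u_def .
qed

lemma loss_incr_measurable[measurable]: "(\<lambda>\<omega>. loss_incr n \<omega> v) \<in> borel_measurable M"
  unfolding loss_incr_def by measurable

lemma expectation_loss_incr: "expectation (\<lambda>\<omega>. loss_incr n \<omega> v) = (\<Sum>i<n. expectation (\<lambda>\<omega>. knight_rem (eps i \<omega>) (res_shift n v i)))"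
  unfolding loss_incr_def by (simp add: Bochner_Integration.integral_sum integrable_check_fun_diff expectation_check_fun_diff)

lemma expectation_loss_incr_ge:
  assumes n: "n > 0" and small: "\<forall>i<n. \<bar>res_shift n v i\<bar> < dens_radius"
  shows "expectation (\<lambda>\<omega>. loss_incr n \<omega> v) \<ge> (f 0/16) * qform (gram n X) v"
proof -
  have "(f 0/16) * qform (gram n X) v = (\<Sum>i<n. f 0 * (res_shift n v i)^2 / 16)"
    unfolding sum_sq_lin_eq_qform_gram[OF n, symmetric] res_shift_def by (simp add: sum_distrib_left sum_divide_distrib)
  also have "\<dots> \<le> (\<Sum>i<n. expectation (\<lambda>\<omega>. knight_rem (eps i \<omega>) (res_shift n v i)))"
    using small by (intro sum_mono expectation_knight_rem_ge) auto
  finally show ?thesis unfolding expectation_loss_incr .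
qed

lemma Chebyshev_loss_incr:
  assumes n: "n > 0" and a: "a > 0"
  shows "prob {\<omega>\<in>space M. a \<le> \<bar>loss_incr n \<omega> v - expectation (\<lambda>\<omega>. loss_incr n \<omega> v)\<bar>} \<le> 4 * qform (gram n X) v / a^2"
proof -
  define m where "m i = expectation (\<lambda>\<omega>. check_fun \<tau> (eps i \<omega> - res_shift n v i) - check_fun \<tau> (eps i \<omega>))" for i
  define h where "h i x = check_fun \<tau> (x - res_shift n v i) - check_fun \<tau> x - m i" for i x
  have am: "\<bar>check_fun \<tau> (x - t) - check_fun \<tau> x\<bar> \<le> \<bar>t\<bar>" for x t
    using check_fun_Lipschitz[OF tau, of "x - t" x] by simp
  have mb: "\<bar>m i\<bar> \<le> \<bar>res_shift n v i\<bar>" for i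
    unfolding m_def by (rule abs_expectation_le[OF integrable_check_fun_diff am])
  have hm: "h i \<in> borel_measurable borel" for i unfolding h_def by measurable
  have hb: "\<bar>h i x\<bar> \<le> 2 * \<bar>res_shift n v i\<bar>" for i x
    using am[of x "res_shift n v i"] mb[of i] unfolding h_def by linarith
  have h0: "expectation (\<lambda>\<omega>. h i (eps i \<omega>)) = 0" for i
    unfolding h_def m_def by (simp add: Bochner_Integration.integral_diff integrable_check_fun_diff prob_space)
  have V: "expectation (\<lambda>\<omega>. (h i (eps i \<omega>))^2) \<le> 4 * (res_shift n v i)^2" for i
  proof -
    have sq: "(h i x)^2 \<le> 4 * (res_shift n v i)^2" for x
      using power_mono[OF hb[of i x] abs_ge_zero, of 2] by (simp add: power_mult_distrib)
    have "integrable M (\<lambda>\<omega>. (h i (eps i \<omega>))^2)"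
    proof (rule integrable_bounded[where B="4 * (res_shift n v i)^2"])
      show "(\<lambda>\<omega>. (h i (eps i \<omega>))^2) \<in> borel_measurable M" using hm by measurable
    qed (simp add: sq)
    then have "expectation (\<lambda>\<omega>. (h i (eps i \<omega>))^2) \<le> expectation (\<lambda>\<omega>. 4 * (res_shift n v i)^2)"
      using sq by (intro integral_mono) auto
    then show ?thesis by (simp add: prob_space)
  qed
  have "prob {\<omega>\<in>space M. a \<le> \<bar>\<Sum>i\<in>{..<n}. h i (eps i \<omega>)\<bar>} \<le> (\<Sum>i\<in>{..<n}. 4 * (res_shift n v i)^2) / a^2"
    by (rule Chebyshev_indep_sum[OF hm hb h0 _ a V]) auto
  also have "(\<Sum>i\<in>{..<n}. 4 * (res_shift n v i)^2) = 4 * qform (gram n X) v"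
  proof -
    have "(\<Sum>i\<in>{..<n}. (res_shift n v i)^2) = qform (gram n X) v"
      unfolding res_shift_def by (rule sum_sq_lin_eq_qform_gram[OF n])
    then show ?thesis by (simp only: sum_distrib_left[symmetric])
  qed
  also have "(\<lambda>\<omega>. \<Sum>i\<in>{..<n}. h i (eps i \<omega>)) = (\<lambda>\<omega>. loss_incr n \<omega> v - expectation (\<lambda>\<omega>. loss_incr n \<omega> v))"
  proof -
    have "expectation (\<lambda>\<omega>. loss_incr n \<omega> v) = (\<Sum>i<n. m i)"
      unfolding loss_incr_def m_def by (rule Bochner_Integration.integral_sum) (rule integrable_check_fun_diff)
    then show ?thesis unfolding h_def by (simp add: loss_incr_def sum_subtractf)
  qed
  finally show ?thesis .
qed

lemma prob_score_large:
  assumes n: "n > 0" and Zb: "Zb > 0"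
  shows "prob {\<omega>\<in>space M. Zb^2 \<le> (pnorm p d (score n \<omega>))^2} \<le> mean_sq_norm n / Zb^2"
proof -
  define hh where "hh a i (x::real) = (coord (X i) a / sqrt n) * (\<tau> - of_bool (x < 0))" for a i x
  have hm: "hh a i \<in> borel_measurable borel" for a i unfolding hh_def by measurable
  have sgn: "\<bar>\<tau> - of_bool (x < 0)\<bar> \<le> 1" for x using tau by (auto simp: of_bool_def)
  have hb: "\<bar>hh a i x\<bar> \<le> \<bar>coord (X i) a / sqrt n\<bar>" for a i x
  proof -
    have "\<bar>coord (X i) a\<bar> * \<bar>\<tau> - of_bool (x < 0)\<bar> \<le> \<bar>coord (X i) a\<bar>" by (rule mult_left_le[OF sgn]) simp
    then show ?thesis unfolding hh_def abs_mult by (simp add: divide_right_mono)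
  qed
  have h0: "expectation (\<lambda>\<omega>. hh a i (eps i \<omega>)) = 0" for a i
    unfolding hh_def by (rule expectation_sign_term)
  have ucZ: "coord (score n \<omega>) a = (\<Sum>i\<in>{..<n}. hh a i (eps i \<omega>))" for a \<omega>
    unfolding score_def coord_def hh_def by (simp add: sum_divide_distrib mult_ac)
  have E1: "expectation (\<lambda>\<omega>. (coord (score n \<omega>) a)^2) \<le> (\<Sum>i<n. (coord (X i) a)^2 / n)" for a
  proof -
    have "expectation (\<lambda>\<omega>. (coord (score n \<omega>) a)^2) = (\<Sum>i\<in>{..<n}. expectation (\<lambda>\<omega>. (hh a i (eps i \<omega>))^2))"
      unfolding ucZ by (rule expectation_square_indep_sum(1)[OF hm hb h0]) simp
    also have "\<dots> \<le> (\<Sum>i<n. (coord (X i) a)^2 / n)"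
    proof (rule sum_mono)
      fix i
      have b: "(hh a i x)^2 \<le> (coord (X i) a)^2 / n" for x
      proof -
        have "\<bar>hh a i x\<bar>^2 \<le> \<bar>coord (X i) a / sqrt n\<bar>^2" by (rule power_mono[OF hb]) simp
        then show ?thesis using n by (simp add: power_divide)
      qed
      have "expectation (\<lambda>\<omega>. (hh a i (eps i \<omega>))^2) \<le> expectation (\<lambda>\<omega>. (coord (X i) a)^2 / n)"
      proof (rule integral_mono[OF _ _ b])
        show "integrable M (\<lambda>\<omega>. (hh a i (eps i \<omega>))^2)"
          by (rule integrable_bounded[where B="(coord (X i) a)^2 / n"]) (use hm b in auto)
      qed simp
      then show "expectation (\<lambda>\<omega>. (hh a i (eps i \<omega>))^2) \<le> (coord (X i) a)^2 / n" by (simp add: prob_space)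
    qed
    finally show ?thesis .
  qed
  have intZ: "integrable M (\<lambda>\<omega>. (coord (score n \<omega>) a)^2)" for a
    unfolding ucZ by (rule expectation_square_indep_sum(2)[OF hm hb h0]) simp
  have psq: "(pnorm p d (score n \<omega>))^2 = (\<Sum>a\<in>idx p d. (coord (score n \<omega>) a)^2)" for \<omega> by (rule pnorm_power2)
  have "prob {\<omega>\<in>space M. Zb^2 \<le> (pnorm p d (score n \<omega>))^2} \<le> expectation (\<lambda>\<omega>. (pnorm p d (score n \<omega>))^2) / Zb^2"
    unfolding psq using Zb
    by (intro integral_Markov_inequality_measure[where A="space M"] Bochner_Integration.integrable_sum intZ)
       (auto intro!: AE_I2 sum_nonneg)
  also have "expectation (\<lambda>\<omega>. (pnorm p d (score n \<omega>))^2) \<le> (\<Sum>a\<in>idx p d. \<Sum>i<n. (coord (X i) a)^2 / n)"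
    unfolding psq by (simp add: Bochner_Integration.integral_sum intZ sum_mono E1)
  also have "(\<Sum>a\<in>idx p d. \<Sum>i<n. (coord (X i) a)^2 / n) = (\<Sum>i<n. (pnorm p d (X i))^2) / n"
    unfolding pnorm_power2 by (subst sum.swap) (simp add: sum_divide_distrib)
  finally show ?thesis using Zb by (simp add: divide_right_mono mean_sq_norm_def)
qed

lemma near_zero_weight_measurable[measurable]: "(\<lambda>\<omega>. near_zero_weight n h \<omega>) \<in> borel_measurable M"
  unfolding near_zero_weight_def by measurable

lemma prob_near_zero_weight_large:
  assumes n: "n > 0" and Lb: "Lb > 0" and h: "h \<ge> 0"
    and small: "\<forall>i<n. h * pnorm p d (X i) / sqrt n < dens_radius"
  shows "prob {\<omega>\<in>space M. Lb \<le> near_zero_weight n h \<omega>} \<le> 4 * f 0 * h * mean_sq_norm n / Lb"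
proof -
  have int1: "integrable M (\<lambda>\<omega>. of_bool (\<bar>eps i \<omega>\<bar> \<le> c) :: real)" for i c
    by (rule integrable_bounded[where B=1]) (auto simp: of_bool_def)
  have intL: "integrable M (\<lambda>\<omega>. near_zero_weight n h \<omega>)"
    unfolding near_zero_weight_def by (intro Bochner_Integration.integrable_sum integrable_mult_right int1)
  have "prob {\<omega>\<in>space M. Lb \<le> near_zero_weight n h \<omega>} \<le> expectation (\<lambda>\<omega>. near_zero_weight n h \<omega>) / Lb"
    using Lb by (intro integral_Markov_inequality_measure[where A="space M"] intL)
                (auto simp: near_zero_weight_def intro!: sum_nonneg mult_nonneg_nonneg)
  also have "expectation (\<lambda>\<omega>. near_zero_weight n h \<omega>) \<le> (\<Sum>i<n. (pnorm p d (X i) / sqrt n) * (4 * f 0 * (h * pnorm p d (X i) / sqrt n)))"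
    unfolding near_zero_weight_def
  proof (subst Bochner_Integration.integral_sum, simp add: int1, rule sum_mono)
    fix i assume i: "i \<in> {..<n}"
    have "expectation (\<lambda>\<omega>. of_bool (\<bar>eps i \<omega>\<bar> \<le> h * pnorm p d (X i) / sqrt n)) \<le> 4 * f 0 * (h * pnorm p d (X i) / sqrt n)"
      by (rule expectation_abs_eps_le) (use small i h in auto)
    then show "expectation (\<lambda>\<omega>. pnorm p d (X i) / sqrt n * of_bool (\<bar>eps i \<omega>\<bar> \<le> h * pnorm p d (X i) / sqrt n))
        \<le> pnorm p d (X i) / sqrt n * (4 * f 0 * (h * pnorm p d (X i) / sqrt n))"
      by (simp only: Bochner_Integration.integral_mult_right_zero) (rule mult_left_mono, simp_all)
  qed
  also have "(\<Sum>i<n. (pnorm p d (X i) / sqrt n) * (4 * f 0 * (h * pnorm p d (X i) / sqrt n)))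
      = 4 * f 0 * h * mean_sq_norm n"
    using n by (simp add: mean_sq_norm_def sum_distrib_left sum_divide_distrib power2_eq_square mult_ac)
  finally show ?thesis using Lb by (simp add: divide_right_mono)
qed
end

section \<open>Lower bound on a sphere\<close>

context quantile_design
begin

lemma score_norm_measurable [measurable]: "(\<lambda>\<omega>. pnorm p d (score n \<omega>)) \<in> borel_measurable M"
  unfolding pnorm_def score_def by measurable

text \<open>Chosen so that the lower bound \<open>(f 0/16)(coerc/2)(C/2)\<^sup>2\<close> for the expected loss increment
  on the annulus \<open>C/2 \<le> \<parallel>w\<parallel> \<le> 2C\<close> equals \<open>\<kappa>C\<^sup>2\<close>.\<close>
definition kappa :: real where
  "kappa = f 0 * coerc / 128"

lemma kappa_pos: "kappa > 0"
  using f_pos coerc(1) by (simp add: kappa_def)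

lemma expectation_loss_incr_annulus_ge:
  assumes n: "n > 0" and q: "qform (gram n X) w \<ge> (coerc/2) * (pnorm p d w)^2"
    and X_small: "\<forall>i<n. pnorm p d (X i) * pnorm p d w / sqrt n < dens_radius"
    and w: "C/2 \<le> pnorm p d w" "C \<ge> 0"
  shows "expectation (\<lambda>\<omega>. loss_incr n \<omega> w) \<ge> kappa * C^2"
proof -
  have "\<bar>res_shift n w i\<bar> < dens_radius" if "i < n" for i
    using abs_res_shift_le[of n w i] X_small that by fastforce
  then have "expectation (\<lambda>\<omega>. loss_incr n \<omega> w) \<ge> (f 0/16) * qform (gram n X) w"
    by (intro expectation_loss_incr_ge[OF n]) auto
  moreover have "(f 0/16) * ((coerc/2) * (C/2)^2) \<le> (f 0/16) * qform (gram n X) w"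
    using q w f_pos coerc(1)
    by (intro mult_left_mono order.trans[OF _ q] power_mono) auto
  moreover have "(f 0/16) * ((coerc/2) * (C/2)^2) = kappa * C^2"
    by (simp add: kappa_def power_divide)
  ultimately show ?thesis by linarith
qed

lemma loss_incr_gt_of_net_point:
  assumes v: "pnorm p d v = C" and vw: "pnorm p d (\<lambda>j k. v j k - w j k) \<le> \<rho>" "\<rho> \<le> C/2"
    and Dw: "loss_incr n \<omega> w > 2 * B"
    and lip: "\<rho> * (pnorm p d (score n \<omega>) + near_zero_weight n (2 * C) \<omega>) \<le> B"
  shows "loss_incr n \<omega> v > B"
proof -
  have "pnorm p d w \<le> pnorm p d v + pnorm p d (\<lambda>j k. w j k - v j k)"
    by (rule pnorm_le_pnorm_add_diff)
  then have "pnorm p d w \<le> 2 * C"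
    using v vw pnorm_diff_commute[of p d v w] pnorm_nonneg[of p d v] by linarith
  moreover have "0 \<le> pnorm p d (score n \<omega>) + near_zero_weight n (2 * C) \<omega>"
    unfolding near_zero_weight_def by (intro add_nonneg_nonneg sum_nonneg) auto
  ultimately have "\<bar>loss_incr n \<omega> v - loss_incr n \<omega> w\<bar>
      \<le> pnorm p d (\<lambda>j k. v j k - w j k) * (pnorm p d (score n \<omega>) + near_zero_weight n (2 * C) \<omega>)"
    using v pnorm_nonneg[of p d v] by (intro loss_incr_Lipschitz) auto
  also have "\<dots> \<le> \<rho> * (pnorm p d (score n \<omega>) + near_zero_weight n (2 * C) \<omega>)"
    using vw(1) \<open>0 \<le> pnorm p d (score n \<omega>) + near_zero_weight n (2 * C) \<omega>\<close> by (rule mult_right_mono)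
  finally show ?thesis using Dw lip by linarith
qed

lemma prob_loss_incr_deviation_le:
  assumes n: "n > 0" and C: "C > 0" and w: "pnorm p d w \<le> 2 * C" and Tn: "mean_sq_norm n \<le> T"
  shows "prob {\<omega>\<in>space M. kappa * C^2 / 2 \<le> \<bar>loss_incr n \<omega> w - expectation (\<lambda>\<omega>. loss_incr n \<omega> w)\<bar>}
           \<le> 64 * T / (kappa^2 * C^2)"
proof -
  have "qform (gram n X) w \<le> mean_sq_norm n * (pnorm p d w)^2" by (rule qform_gram_le[OF n])
  also have "\<dots> \<le> T * (2 * C)^2"
    using Tn w mean_sq_norm_nonneg[of n] by (intro mult_mono power_mono) auto
  finally have "4 * qform (gram n X) w / (kappa * C^2 / 2)^2 \<le> 4 * (T * (2 * C)^2) / (kappa * C^2 / 2)^2"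
    by (intro divide_right_mono) simp_all
  also have "\<dots> = 64 * T / (kappa^2 * C^2)"
    using C kappa_pos by (simp add: field_simps power2_eq_square)
  finally show ?thesis
    using Chebyshev_loss_incr[OF n, of "kappa * C^2 / 2" w] kappa_pos C by simp
qed

lemma loss_incr_sphere_gt_of_good_event:
  assumes n: "n > 0" and C: "C > 0"
    and q: "\<And>v. qform (gram n X) v \<ge> (coerc/2) * (pnorm p d v)^2"
    and X_small: "\<And>i. i < n \<Longrightarrow> 2 * C * pnorm p d (X i) / sqrt n < dens_radius"
    and v: "pnorm p d v = C" and vw: "pnorm p d (\<lambda>j k. v j k - w j k) \<le> h" and h: "h \<le> C/2"
    and dev: "C/2 \<le> pnorm p d w \<Longrightarrow> pnorm p d w \<le> 2 * C \<Longrightarrow>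
               \<bar>loss_incr n \<omega> w - expectation (\<lambda>\<omega>. loss_incr n \<omega> w)\<bar> < kappa * C^2 / 2"
    and lip: "h * (pnorm p d (score n \<omega>) + near_zero_weight n (2 * C) \<omega>) \<le> kappa * C^2 / 4"
  shows "loss_incr n \<omega> v > kappa * C^2 / 4"
proof -
  have w_lo: "C/2 \<le> pnorm p d w" and w_hi: "pnorm p d w \<le> 2 * C"
    using pnorm_le_pnorm_add_diff[of p d v w] pnorm_le_pnorm_add_diff[of p d w v]
      pnorm_diff_commute[of p d w v] v vw h C by linarith+
  have "pnorm p d (X i) * pnorm p d w / sqrt n < dens_radius" if "i < n" for i
  proof -
    have "pnorm p d (X i) * pnorm p d w \<le> pnorm p d (X i) * (2 * C)"
      using w_hi by (rule mult_left_mono) simp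
    then have "pnorm p d (X i) * pnorm p d w / sqrt n \<le> 2 * C * pnorm p d (X i) / sqrt n"
      using divide_right_mono[of _ _ "sqrt n"] by (simp add: mult_ac)
    then show ?thesis using X_small[OF that] by linarith
  qed
  then have "expectation (\<lambda>\<omega>. loss_incr n \<omega> w) \<ge> kappa * C^2"
    using C w_lo by (intro expectation_loss_incr_annulus_ge[OF n q]) auto
  with dev[OF w_lo w_hi] have "loss_incr n \<omega> w > 2 * (kappa * C^2 / 4)"
    unfolding abs_less_iff by linarith
  then show ?thesis by (rule loss_incr_gt_of_net_point[OF v vw h _ lip])
qed

text \<open>The bad event: a large deviation of the loss increment at some net point of the annulus
  \<open>C/2 \<le> \<parallel>w\<parallel> \<le> 2C\<close>, a large score, or too many errors near 0; off it the sphere bound holds.\<close>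
lemma loss_incr_sphere_bound_event:
  assumes n: "n > 0" and C: "C > 0" and Zb: "Zb > 0" and L: "L > 0"
    and q: "\<And>v. qform (gram n X) v \<ge> (coerc/2) * (pnorm p d v)^2"
    and Tn: "mean_sq_norm n \<le> T"
    and X_small: "\<And>i. i < n \<Longrightarrow> 2 * C * pnorm p d (X i) / sqrt n < dens_radius"
    and G: "finite G" "\<And>v. pnorm p d v = C \<Longrightarrow> \<exists>w\<in>G. pnorm p d (\<lambda>j k. v j k - w j k) \<le> h"
    and h: "h \<le> C/2" "h * (Zb + C * L) \<le> kappa * C^2 / 4"
  shows "\<exists>A\<in>sets M. prob A \<le> card G * (64 * T / (kappa^2 * C^2)) + T / Zb^2 + 8 * f 0 * T / L \<and>
           (\<forall>\<omega>\<in>space M - A. \<forall>v. pnorm p d v = C \<longrightarrow> loss_incr n \<omega> v > kappa * C^2 / 4)"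
proof -
  define G' where "G' = {w\<in>G. C/2 \<le> pnorm p d w \<and> pnorm p d w \<le> 2*C}"
  have G': "finite G'" "card G' \<le> card G"
    using G(1) card_mono[OF G(1), of G'] unfolding G'_def by auto
  define Bw where "Bw w = {\<omega>\<in>space M. kappa*C^2/2 \<le> \<bar>loss_incr n \<omega> w - expectation (\<lambda>\<omega>. loss_incr n \<omega> w)\<bar>}" for w
  define AZ where "AZ = {\<omega>\<in>space M. Zb^2 \<le> (pnorm p d (score n \<omega>))^2}"
  define AL where "AL = {\<omega>\<in>space M. C*L \<le> near_zero_weight n (2*C) \<omega>}"
  define A where "A = (\<Union>w\<in>G'. Bw w) \<union> AZ \<union> AL"
  have Bw_sets: "Bw w \<in> sets M" for w unfolding Bw_def by measurable
  have sets: "(\<Union>w\<in>G'. Bw w) \<in> sets M" "AZ \<in> sets M" "AL \<in> sets M"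
    using Bw_sets G'(1) unfolding AZ_def AL_def by (auto intro!: sets.finite_UN) measurable
  have "prob (\<Union>w\<in>G'. Bw w) \<le> (\<Sum>w\<in>G'. prob (Bw w))"
    by (rule measure_UNION_le[OF G'(1) Bw_sets])
  also have "\<dots> \<le> (\<Sum>w\<in>G'. 64 * T / (kappa^2 * C^2))"
  proof (rule sum_mono)
    fix w assume "w \<in> G'"
    then show "prob (Bw w) \<le> 64 * T / (kappa^2 * C^2)"
      unfolding Bw_def by (intro prob_loss_incr_deviation_le[OF n C _ Tn]) (simp add: G'_def)
  qed
  also have "\<dots> = card G' * (64 * T / (kappa^2 * C^2))" by simp
  also have "\<dots> \<le> card G * (64 * T / (kappa^2 * C^2))"
    using G'(2) mean_sq_norm_nonneg[of n] Tn by (intro mult_right_mono) auto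
  finally have pB: "prob (\<Union>w\<in>G'. Bw w) \<le> card G * (64 * T / (kappa^2 * C^2))" .
  have pZ: "prob AZ \<le> T / Zb^2"
    unfolding AZ_def using prob_score_large[OF n Zb] divide_right_mono[OF Tn zero_le_power2[of Zb]]
    by (rule order.trans)
  have "prob AL \<le> 4 * f 0 * (2*C) * mean_sq_norm n / (C*L)"
    unfolding AL_def using C L X_small by (intro prob_near_zero_weight_large[OF n]) (auto simp: mult.assoc)
  also have "\<dots> \<le> 4 * f 0 * (2*C) * T / (C*L)"
    using Tn C L f_pos by (intro divide_right_mono mult_left_mono) auto
  also have "\<dots> = 8 * f 0 * T / L" using C by simp
  finally have pL: "prob AL \<le> 8 * f 0 * T / L" .
  have "prob A \<le> prob ((\<Union>w\<in>G'. Bw w) \<union> AZ) + prob AL"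
    unfolding A_def using sets by (intro measure_Un_le) auto
  also have "\<dots> \<le> prob (\<Union>w\<in>G'. Bw w) + prob AZ + prob AL"
    using measure_Un_le[OF sets(1,2)] by simp
  finally have pA: "prob A \<le> card G * (64 * T / (kappa^2 * C^2)) + T / Zb^2 + 8 * f 0 * T / L"
    using pB pZ pL by linarith
  have good: "loss_incr n \<omega> v > kappa * C^2 / 4" if \<omega>: "\<omega> \<in> space M - A" and v: "pnorm p d v = C" for \<omega> v
  proof -
    obtain w where "w \<in> G" and vw: "pnorm p d (\<lambda>j k. v j k - w j k) \<le> h"
      using G(2)[OF v] by auto
    have "(pnorm p d (score n \<omega>))^2 < Zb^2" and nzw: "near_zero_weight n (2*C) \<omega> < C * L"
      using \<omega> unfolding A_def AZ_def AL_def by auto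
    then have "pnorm p d (score n \<omega>) + near_zero_weight n (2*C) \<omega> \<le> Zb + C * L"
      using power_less_imp_less_base[of "pnorm p d (score n \<omega>)" 2 Zb] Zb by simp
    moreover have "0 \<le> h" using vw pnorm_nonneg[of p d "\<lambda>j k. v j k - w j k"] by linarith
    ultimately have "h * (pnorm p d (score n \<omega>) + near_zero_weight n (2*C) \<omega>) \<le> h * (Zb + C * L)"
      by (rule mult_left_mono)
    with h(2) have lip: "h * (pnorm p d (score n \<omega>) + near_zero_weight n (2*C) \<omega>) \<le> kappa * C^2 / 4"
      by linarith
    have dev: "\<bar>loss_incr n \<omega> w - expectation (\<lambda>\<omega>. loss_incr n \<omega> w)\<bar> < kappa * C^2 / 2"
      if "C/2 \<le> pnorm p d w" "pnorm p d w \<le> 2 * C"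
      using \<omega> that \<open>w \<in> G\<close> unfolding A_def Bw_def G'_def by auto
    show ?thesis by (rule loss_incr_sphere_gt_of_good_event[OF n C q X_small v vw h(1) dev lip])
  qed
  have "A \<in> sets M" unfolding A_def using sets by auto
  then show ?thesis using pA good by (intro bexI[of _ A] conjI ballI allI impI) auto
qed

lemma eventually_regular_design:
  assumes "\<eta> > 0"
  shows "eventually (\<lambda>n. n > 0 \<and> (\<forall>v. qform (gram n X) v \<ge> (coerc/2) * (pnorm p d v)^2) \<and>
           mean_sq_norm n \<le> trace_bound \<and> (\<forall>i<n. pnorm p d (X i) / sqrt n \<le> \<eta>)) sequentially"
  using eventually_gt_at_top[of 0] eventually_qform_gram_ge eventually_mean_sq_norm_le
    eventually_max_norm_le[OF assms] by eventually_elim auto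

lemma loss_incr_sphere_bound_in_prob:
  assumes e: "e > 0"
  shows "\<exists>C\<ge>1. \<exists>N. \<forall>n\<ge>N. \<exists>A\<in>sets M. prob A < e \<and>
           (\<forall>\<omega>\<in>space M - A. \<forall>v. pnorm p d v = C \<longrightarrow> loss_incr n \<omega> v > kappa * C^2 / 4)"
proof -
  define T where "T = trace_bound"
  define Zb where "Zb = sqrt (4*T/e)"
  define L where "L = 32 * f 0 * T/e"
  define r where "r = sqrt (real (p*d))"
  define \<sigma> where "\<sigma> = min (1/(2*r)) (kappa/(4*r*(Zb+L)))"
  define Nc where "Nc = (nat (2*\<lceil>1/\<sigma>\<rceil> + 1))^(p*d)"
  define C where "C = max 1 (sqrt (256*Nc*T/(kappa^2*e)))"
  have T: "T > 0" unfolding T_def by (rule trace_bound_pos)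
  have Zb: "Zb > 0" "T / Zb^2 = e/4" unfolding Zb_def using T e by simp_all
  have L: "L > 0" "8 * f 0 * T / L = e/4" unfolding L_def using T e f_pos by simp_all
  have "1 \<le> p * d" using pd by (metis mult_le_mono nat_mult_1)
  then have "(1::real) \<le> real (p * d)" by linarith
  then have r: "r \<ge> 1" unfolding r_def by simp
  have "\<sigma> > 0" unfolding \<sigma>_def using r kappa_pos Zb(1) L(1) by simp
  moreover have "\<sigma> * r \<le> 1/(2*r) * r"
    unfolding \<sigma>_def using r by (intro mult_right_mono) auto
  moreover have "\<sigma> * (r * (Zb + L)) \<le> kappa/(4*r*(Zb+L)) * (r * (Zb + L))"
    unfolding \<sigma>_def using r Zb(1) L(1) by (intro mult_right_mono) auto
  ultimately have \<sigma>: "\<sigma> > 0" "\<sigma> * r \<le> 1/2" "\<sigma> * r * (Zb + L) \<le> kappa/4"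
    using r Zb(1) L(1) by (simp_all add: mult.assoc)
  have C: "C \<ge> 1" "256*Nc*T/(kappa^2*e) \<le> C^2" unfolding C_def by (auto intro: sqrt_le_D)
  have "card G * (64 * T / (kappa^2 * C^2)) \<le> e/4" if "card G \<le> Nc" for G :: "'b set"
  proof -
    have "card G * (64 * T / (kappa^2 * C^2)) \<le> Nc * (64 * T / (kappa^2 * C^2))"
      using that T by (intro mult_right_mono) auto
    also have "\<dots> \<le> e/4" using C(2) kappa_pos e C(1) by (simp add: field_simps)
    finally show ?thesis .
  qed
  moreover have "C * \<sigma> > 0" "C \<ge> 0" using C \<sigma>(1) by simp_all
  from exists_grid_net[OF this, of p d] obtain G where G: "finite G"
    "card G \<le> (nat (2 * \<lceil>C/(C*\<sigma>)\<rceil> + 1))^(p*d)"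
    "\<And>v. pnorm p d v \<le> C \<Longrightarrow> \<exists>w\<in>G. pnorm p d (\<lambda>j k. v j k - w j k) \<le> C * \<sigma> * r"
    unfolding r_def by blast
  moreover have "C/(C*\<sigma>) = 1/\<sigma>" using C by simp
  ultimately have pG: "card G * (64 * T / (kappa^2 * C^2)) \<le> e/4" unfolding Nc_def by simp
  have h: "C * \<sigma> * r \<le> C/2" using mult_left_mono[OF \<sigma>(2), of C] C by (simp add: mult.assoc)
  have "C * \<sigma> * r * (Zb + C * L) \<le> C * \<sigma> * r * (C * (Zb + L))"
    using mult_right_mono[OF C(1), of Zb] Zb C \<sigma>(1) r by (intro mult_left_mono) (simp_all add: distrib_left)
  also have "\<dots> = C^2 * (\<sigma> * r * (Zb + L))" unfolding power2_eq_square by algebra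
  also have "\<dots> \<le> C^2 * (kappa / 4)" using \<sigma>(3) by (rule mult_left_mono) simp
  finally have h': "C * \<sigma> * r * (Zb + C * L) \<le> kappa * C^2 / 4" by (simp add: mult_ac)
  define \<eta> where "\<eta> = dens_radius / (4*C)"
  have \<eta>: "\<eta> > 0" "2 * C * \<eta> < dens_radius"
    unfolding \<eta>_def using dens_radius(1) C by (simp_all add: field_simps)
  obtain N where N: "\<And>n. n \<ge> N \<Longrightarrow> n > 0 \<and> (\<forall>v. qform (gram n X) v \<ge> (coerc/2) * (pnorm p d v)^2) \<and>
      mean_sq_norm n \<le> T \<and> (\<forall>i<n. pnorm p d (X i) / sqrt n \<le> \<eta>)"
    using eventually_regular_design[OF \<eta>(1)] unfolding T_def eventually_sequentially by blast
  show ?thesis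
  proof (intro exI[of _ C] conjI C(1) exI[of _ N] allI impI)
    fix n assume "n \<ge> N"
    then have n: "n > 0" and q: "\<And>v. qform (gram n X) v \<ge> (coerc/2) * (pnorm p d v)^2"
      and Tn: "mean_sq_norm n \<le> T" and Xn: "\<And>i. i < n \<Longrightarrow> pnorm p d (X i) / sqrt n \<le> \<eta>"
      using N by auto
    have "2 * C * pnorm p d (X i) / sqrt n < dens_radius" if "i < n" for i
      using mult_left_mono[OF Xn[OF that], of "2 * C"] C(1) \<eta>(2) by simp
    moreover have "\<exists>w\<in>G. pnorm p d (\<lambda>j k. v j k - w j k) \<le> C * \<sigma> * r" if "pnorm p d v = C" for v
      using G(3) that by simp
    ultimately obtain A where A: "A \<in> sets M"
      "prob A \<le> card G * (64 * T / (kappa^2 * C^2)) + T / Zb^2 + 8 * f 0 * T / L"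
      "\<forall>\<omega>\<in>space M - A. \<forall>v. pnorm p d v = C \<longrightarrow> loss_incr n \<omega> v > kappa * C^2 / 4"
      using loss_incr_sphere_bound_event[OF n _ Zb(1) L(1) q Tn _ G(1) _ h h'] C(1) by auto
    have "card G * (64 * T / (kappa^2 * C^2)) + T / Zb^2 + 8 * f 0 * T / L \<le> e/4 + e/4 + e/4"
      using pG Zb(2) L(2) by (intro add_mono) simp_all
    then have "prob A \<le> e/4 + e/4 + e/4" using A(2) by (rule order.trans[rotated])
    then have "prob A < e" using e by simp
    with A(1,3) show "\<exists>A\<in>sets M. prob A < e \<and>
        (\<forall>\<omega>\<in>space M - A. \<forall>v. pnorm p d v = C \<longrightarrow> kappa * C^2 / 4 < loss_incr n \<omega> v)"
      by blast
  qed
qed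
end

section \<open>Rate of the fused estimator\<close>

context quantile_design
begin

lemma Gn_shift_eq_loss_incr:
  assumes "n > 0"
  shows "Gn \<tau> p d X (\<lambda>i. lin p d (X i) b0 + eps i \<omega>) n (\<lambda>j k. b0 j k + v j k / sqrt n)
       - Gn \<tau> p d X (\<lambda>i. lin p d (X i) b0 + eps i \<omega>) n b0 = loss_incr n \<omega> v"
proof -
  have "lin p d (X i) (\<lambda>j k. b0 j k + v j k / sqrt n) = lin p d (X i) b0 + res_shift n v i" for i
    unfolding res_shift_def lin_add lin_divide ..
  then show ?thesis unfolding Gn_def loss_incr_def by (simp add: sum_subtractf)
qed

text \<open>On an \<omega> where the loss increment exceeds \<open>\<kappa>C\<^sup>2/4\<close> on the sphere of radius \<open>C\<close>, both
  estimators lie within \<open>C/\<surd>n\<close> of \<open>\<beta>0\<close>: for the quantile estimator by convexity alone, for the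
  penalised one because, once \<open>bt\<close> is \<open>\<rho>\<close>-close to \<open>\<beta>0\<close>, the change of penalty is at most
  \<open>O(\<mu>/\<surd>n)\<close>.\<close>
lemma estimators_within_radius:
  fixes bt bh b0 :: "nat \<Rightarrow> nat \<Rightarrow> real" and \<omega> :: 'a
  defines "Y \<equiv> \<lambda>i. lin p d (X i) b0 + eps i \<omega>"
  assumes n: "n > 0" and C: "C \<ge> 1" and gam: "\<gamma> > 0" and m: "m1 \<ge> 0" "m2 \<ge> 0"
    and sphere: "\<And>v. pnorm p d v = C \<Longrightarrow> loss_incr n \<omega> v > kappa * C^2 / 4"
    and bt_min: "\<And>b. Gn \<tau> p d X Y n bt \<le> Gn \<tau> p d X Y n b"
    and bh_min: "\<And>b. Qn \<tau> \<gamma> p d X Y n m1 m2 bt bh \<le> Qn \<tau> \<gamma> p d X Y n m1 m2 bt b"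
    and \<rho>1: "\<And>j. j < p \<Longrightarrow> gnorm d (b0 j) \<noteq> 0 \<Longrightarrow> \<rho> \<le> gnorm d (b0 j) / 4"
    and \<rho>2: "\<And>j. j < p \<Longrightarrow> 1 \<le> j \<Longrightarrow> gnorm d (\<lambda>k. b0 j k - b0 (j-1) k) \<noteq> 0 \<Longrightarrow>
               \<rho> \<le> gnorm d (\<lambda>k. b0 j k - b0 (j-1) k) / 4"
    and C_\<rho>: "C / sqrt n \<le> \<rho>"
    and pen: "(m1 + m2) / sqrt n * (2 * weight_bound \<gamma> p d b0) \<le> kappa / 4"
  shows "sqrt n * pnorm p d (\<lambda>j k. bt j k - b0 j k) \<le> C"
    and "sqrt n * pnorm p d (\<lambda>j k. bh j k - b0 j k) \<le> C"
proof -
  have s: "sqrt n > 0" using n by simp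
  have C': "C > 0" using C by simp
  have B: "kappa * C^2 / 4 \<ge> 0" using kappa_pos by simp
  have G_incr: "Gn \<tau> p d X Y n (\<lambda>j k. b0 j k + v j k / sqrt n) - Gn \<tau> p d X Y n b0 = loss_incr n \<omega> v" for v
    unfolding Y_def by (rule Gn_shift_eq_loss_incr[OF n])
  show "sqrt n * pnorm p d (\<lambda>j k. bt j k - b0 j k) \<le> C"
  proof (rule convex_minimizer_within_radius[where Obj="Gn \<tau> p d X Y n", OF s C' Gn_convex[OF _ _ tau] bt_min])
    fix v assume "pnorm p d v = C"
    then show "Gn \<tau> p d X Y n (\<lambda>j k. b0 j k + v j k / sqrt n) > Gn \<tau> p d X Y n b0"
      using sphere[of v] G_incr[of v] B by linarith
  qed
  then have "pnorm p d (\<lambda>j k. bt j k - b0 j k) \<le> C / sqrt n"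
    using s by (simp add: pos_le_divide_eq mult.commute)
  then have bt_close: "pnorm p d (\<lambda>j k. bt j k - b0 j k) \<le> \<rho>" using C_\<rho> by linarith
  show "sqrt n * pnorm p d (\<lambda>j k. bh j k - b0 j k) \<le> C"
  proof (rule convex_minimizer_within_radius[where Obj="Qn \<tau> \<gamma> p d X Y n m1 m2 bt", OF s C' Qn_convex[OF _ _ tau m] bh_min])
    fix v assume v: "pnorm p d v = C"
    have "pnorm p d (\<lambda>j k. v j k / sqrt n) = C / sqrt n"
      using pnorm_scale[of p d "1 / sqrt n" v] v s by simp
    then have "Qn \<tau> \<gamma> p d X Y n m1 m2 bt b0 - Qn \<tau> \<gamma> p d X Y n m1 m2 bt (\<lambda>j k. b0 j k + v j k / sqrt n)
        \<le> Gn \<tau> p d X Y n b0 - Gn \<tau> p d X Y n (\<lambda>j k. b0 j k + v j k / sqrt n)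
          + (m1 + m2) * weight_bound \<gamma> p d b0 * (2 * (C / sqrt n))"
      by (intro Qn_decrease_le[OF gam m _ bt_close \<rho>1 \<rho>2]) auto
    moreover have "kappa / 4 \<le> C * (kappa / 4)" using mult_right_mono[OF C, of "kappa / 4"] kappa_pos by simp
    then have "(m1 + m2) / sqrt n * (2 * weight_bound \<gamma> p d b0) \<le> C * (kappa / 4)"
      by (rule order.trans[OF pen])
    then have "C * ((m1 + m2) / sqrt n * (2 * weight_bound \<gamma> p d b0)) \<le> C * (C * (kappa / 4))"
      using C by (intro mult_left_mono) auto
    then have "(m1 + m2) * weight_bound \<gamma> p d b0 * (2 * (C / sqrt n)) \<le> kappa * C^2 / 4"
      by (simp add: power2_eq_square mult_ac)
    ultimately show "Qn \<tau> \<gamma> p d X Y n m1 m2 bt (\<lambda>j k. b0 j k + v j k / sqrt n) > Qn \<tau> \<gamma> p d X Y n m1 m2 bt b0"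
      using sphere[OF v] G_incr[of v] by linarith
  qed
qed

lemma bounded_in_prob_fused_estimator:
  fixes bt bh :: "nat \<Rightarrow> 'a \<Rightarrow> nat \<Rightarrow> nat \<Rightarrow> real"
  assumes gam: "\<gamma> > 0" and mu_pos: "\<forall>n. mu1 n > 0 \<and> mu2 n > 0"
    and mu1_small: "(\<lambda>n. mu1 n / sqrt (real n)) \<longlonglongrightarrow> 0"
    and mu2_small: "(\<lambda>n. mu2 n / sqrt (real n)) \<longlonglongrightarrow> 0"
    and bt_min: "\<forall>n. \<forall>\<omega>\<in>space M. \<forall>b.
         Gn \<tau> p d X (\<lambda>i. lin p d (X i) \<beta>0 + eps i \<omega>) n (bt n \<omega>)
           \<le> Gn \<tau> p d X (\<lambda>i. lin p d (X i) \<beta>0 + eps i \<omega>) n b"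
    and bh_min: "\<forall>n. \<forall>\<omega>\<in>space M. \<forall>b.
         Qn \<tau> \<gamma> p d X (\<lambda>i. lin p d (X i) \<beta>0 + eps i \<omega>) n (mu1 n) (mu2 n) (bt n \<omega>) (bh n \<omega>)
           \<le> Qn \<tau> \<gamma> p d X (\<lambda>i. lin p d (X i) \<beta>0 + eps i \<omega>) n (mu1 n) (mu2 n) (bt n \<omega>) b"
  shows "bounded_in_prob M (\<lambda>n \<omega>. sqrt (real n) * pnorm p d (\<lambda>j k. bh n \<omega> j k - \<beta>0 j k))"
  unfolding bounded_in_prob_def
proof (intro allI impI)
  fix e :: real assume e: "e > 0"
  obtain \<rho> where \<rho>: "\<rho> > 0"
    "\<And>j. j < p \<Longrightarrow> gnorm d (\<beta>0 j) \<noteq> 0 \<Longrightarrow> \<rho> \<le> gnorm d (\<beta>0 j) / 4"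
    "\<And>j. j < p \<Longrightarrow> 1 \<le> j \<Longrightarrow> gnorm d (\<lambda>k. \<beta>0 j k - \<beta>0 (j-1) k) \<noteq> 0 \<Longrightarrow>
       \<rho> \<le> gnorm d (\<lambda>k. \<beta>0 j k - \<beta>0 (j-1) k) / 4"
    using exists_block_radius[of p d \<beta>0] by blast
  obtain C N1 where C: "C \<ge> 1" and sphere: "\<And>n. n \<ge> N1 \<Longrightarrow> \<exists>A\<in>sets M. prob A < e \<and>
      (\<forall>\<omega>\<in>space M - A. \<forall>v. pnorm p d v = C \<longrightarrow> loss_incr n \<omega> v > kappa * C^2 / 4)"
    using loss_incr_sphere_bound_in_prob[OF e] by blast
  define W where "W = 2 * weight_bound \<gamma> p d \<beta>0"
  have "((\<lambda>n. (mu1 n + mu2 n) / sqrt n * W) \<longlongrightarrow> (0 + 0) * W) sequentially"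
    using mu1_small mu2_small by (simp only: add_divide_distrib) (intro tendsto_intros)
  then have "eventually (\<lambda>n. (mu1 n + mu2 n) / sqrt n * W < kappa/4) sequentially"
    using kappa_pos by (intro order_tendstoD(2)) auto
  then have "eventually (\<lambda>n. (mu1 n + mu2 n) / sqrt n * W \<le> kappa/4) sequentially"
    by (rule eventually_mono) simp
  moreover have "eventually (\<lambda>n. C / sqrt n \<le> \<rho>) sequentially"
  proof -
    have "filterlim (\<lambda>n. sqrt (real n)) at_top sequentially"
      by (rule filterlim_compose[OF sqrt_at_top filterlim_real_sequentially])
    then have "(\<lambda>n. C / sqrt (real n)) \<longlonglongrightarrow> 0"
      by (intro tendsto_divide_0[OF tendsto_const] filterlim_at_top_imp_at_infinity)
    then have "eventually (\<lambda>n. C / sqrt n < \<rho>) sequentially" using \<rho>(1) by (rule order_tendstoD(2))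
    then show ?thesis by (rule eventually_mono) simp
  qed
  moreover have "eventually (\<lambda>n. n > 0) sequentially" by simp
  ultimately obtain N2 where N2: "\<And>n. n \<ge> N2 \<Longrightarrow>
      (mu1 n + mu2 n) / sqrt n * W \<le> kappa/4 \<and> C / sqrt n \<le> \<rho> \<and> n > 0"
    unfolding eventually_sequentially by (metis (no_types, lifting) eventually_conj eventually_sequentially)
  show "\<exists>C N. \<forall>n\<ge>N. \<exists>A\<in>sets M. {\<omega>\<in>space M. C < \<bar>sqrt (real n) * pnorm p d (\<lambda>j k. bh n \<omega> j k - \<beta>0 j k)\<bar>} \<subseteq> A \<and> prob A < e"
  proof (intro exI[of _ C] exI[of _ "max N1 N2"] allI impI)
    fix n assume "max N1 N2 \<le> n"
    then obtain A where A: "A \<in> sets M" "prob A < e"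
      and good: "\<And>\<omega> v. \<omega> \<in> space M - A \<Longrightarrow> pnorm p d v = C \<Longrightarrow> loss_incr n \<omega> v > kappa * C^2 / 4"
      and n: "(mu1 n + mu2 n) / sqrt n * W \<le> kappa/4" "C / sqrt n \<le> \<rho>" "n > 0"
      using sphere[of n] N2[of n] by auto
    have "sqrt n * pnorm p d (\<lambda>j k. bh n \<omega> j k - \<beta>0 j k) \<le> C" if "\<omega> \<in> space M - A" for \<omega>
      using that bt_min bh_min mu_pos n C gam \<rho>(2,3) good[OF that] unfolding W_def
      by (intro estimators_within_radius(2)[where bt="bt n \<omega>"]) (auto simp: less_imp_le)
    then have "{\<omega>\<in>space M. C < \<bar>sqrt (real n) * pnorm p d (\<lambda>j k. bh n \<omega> j k - \<beta>0 j k)\<bar>} \<subseteq> A"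
      by (force simp: abs_mult)
    with A show "\<exists>A\<in>sets M. {\<omega>\<in>space M. C < \<bar>sqrt (real n) * pnorm p d (\<lambda>j k. bh n \<omega> j k - \<beta>0 j k)\<bar>} \<subseteq> A \<and> prob A < e"
      by blast
  qed
qed

end

theorem lemma1:
  fixes M :: "'a measure"
    and p d :: nat
    and \<tau> \<gamma> :: real
    and X :: "nat \<Rightarrow> nat \<Rightarrow> nat \<Rightarrow> real"
    and \<beta>0 :: "nat \<Rightarrow> nat \<Rightarrow> real"
    and eps :: "nat \<Rightarrow> 'a \<Rightarrow> real"
    and f :: "real \<Rightarrow> real"
    and mu1 mu2 :: "nat \<Rightarrow> real"
    and bt bh :: "nat \<Rightarrow> 'a \<Rightarrow> nat \<Rightarrow> nat \<Rightarrow> real"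
  assumes P: "prob_space M"
    and pd: "p \<ge> 1" "d \<ge> 1"
    and tau: "0 < \<tau>" "\<tau> < 1"
    and gam: "\<gamma> > 0"
    \<comment> \<open>(A1)\<close>
    and indep: "prob_space.indep_vars M (\<lambda>_. borel) eps UNIV"
    and ident: "\<forall>i. distr M borel (eps i) = distr M borel (eps 0)"
    and dens: "distributed M lborel (eps 0) (\<lambda>x. ennreal (f x))"
    and f_nonneg: "\<forall>x. f x \<ge> 0"
    and f_loc: "\<exists>\<delta>>0. \<exists>f' B. \<forall>x. \<bar>x\<bar> < \<delta> \<longrightarrow>
                   isCont f x \<and> f x > 0 \<and> (f has_real_derivative f' x) (at x) \<and> \<bar>f' x\<bar> \<le> B"
    and F0: "measure M {\<omega>\<in>space M. eps 0 \<omega> \<le> 0} = \<tau>"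
    \<comment> \<open>(A2)\<close>
    and A2_eig: "\<exists>m0 M0. 0 < m0 \<and> m0 \<le> M0 \<and>
         (\<forall>\<^sub>F n in sequentially. m0 \<le> lambda_min (idx p d) (gram n X)
                                \<and> lambda_max (idx p d) (gram n X) \<le> M0)"
    and A2_lim: "\<exists>U. pos_def (idx p d) U \<and>
         (\<forall>a\<in>idx p d. \<forall>c\<in>idx p d. (\<lambda>n. gram n X a c) \<longlonglongrightarrow> U a c)"
    \<comment> \<open>(A3)\<close>
    and A3: "(\<lambda>n. Max ((\<lambda>i. pnorm p d (X i)) ` {..<n}) / sqrt (real n)) \<longlonglongrightarrow> 0"
    \<comment> \<open>tuning parameters\<close>
    and mu_pos: "\<forall>n. mu1 n > 0 \<and> mu2 n > 0"
    and mu1_inf: "filterlim mu1 at_top sequentially"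
    and mu2_inf: "filterlim mu2 at_top sequentially"
    and mu1_small: "(\<lambda>n. mu1 n / sqrt (real n)) \<longlonglongrightarrow> 0"
    and mu2_small: "(\<lambda>n. mu2 n / sqrt (real n)) \<longlonglongrightarrow> 0"
    and mu1_big: "filterlim (\<lambda>n. real n powr ((\<gamma> - 1) / 2) * mu1 n) at_top sequentially"
    and mu2_big: "filterlim (\<lambda>n. real n powr ((\<gamma> - 1) / 2) * mu2 n) at_top sequentially"
    \<comment> \<open>estimators: bt is the quantile estimator, bh the adaptive fused group LASSO one\<close>
    and bt_min: "\<forall>n. \<forall>\<omega>\<in>space M. \<forall>b.
         Gn \<tau> p d X (\<lambda>i. lin p d (X i) \<beta>0 + eps i \<omega>) n (bt n \<omega>)
           \<le> Gn \<tau> p d X (\<lambda>i. lin p d (X i) \<beta>0 + eps i \<omega>) n b"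
    and bh_min: "\<forall>n. \<forall>\<omega>\<in>space M. \<forall>b.
         Qn \<tau> \<gamma> p d X (\<lambda>i. lin p d (X i) \<beta>0 + eps i \<omega>) n (mu1 n) (mu2 n) (bt n \<omega>) (bh n \<omega>)
           \<le> Qn \<tau> \<gamma> p d X (\<lambda>i. lin p d (X i) \<beta>0 + eps i \<omega>) n (mu1 n) (mu2 n) (bt n \<omega>) b"
  shows "bounded_in_prob M
           (\<lambda>n \<omega>. sqrt (real n) * pnorm p d (\<lambda>j k. bh n \<omega> j k - \<beta>0 j k))"
proof -
  interpret prob_space M by (rule P)
  have "isCont f 0" "f 0 > 0" using f_loc by auto
  moreover obtain U where "pos_def (idx p d) U"
    "\<forall>a\<in>idx p d. \<forall>c\<in>idx p d. (\<lambda>n. gram n X a c) \<longlonglongrightarrow> U a c"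
    using A2_lim by blast
  ultimately interpret quantile_design M eps f \<tau> p d X U
    using indep ident dens F0 tau pd A3 by unfold_locales auto
  show ?thesis
    by (rule bounded_in_prob_fused_estimator[OF gam mu_pos mu1_small mu2_small bt_min bh_min])
qed

end
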